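(* Let $\mathcal{X}=\{x_k\}_{k=1}^\infty$ be a frame for an infinite dimensional (separable) real or complex Hilbert space $\mathbb{H}$. The following are equivalent: (1) $\mathcal{X}$ is injective; (2) for every orthonormal basis $\mathcal{E}=\{e_j\}_{j=1}^\infty$ of $\mathbb{H}$, \[ \overline{\mathrm{span}}\{(|\langle x_k,e_1\rangle|^2,|\langle x_k,e_2\rangle|^2,\dots):k=1,2,\dots\}=\ell_2,\] the closed linear span being taken in the real space $\ell_2$.
   Context: A family $\{x_k\}$ in a Hilbert space is called injective if whenever a Hilbert–Schmidt self-adjoint operator $T$ satisfies $\langle Tx_k,x_k\rangle=0$ for all $k$, then $T=0$. *)

theory Defs
  imports "HOL-Analysis.Analysis"
begin

text \<open>
  A complex
  Hilbert space is encoded as its underlying real Hilbert space together with an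
  orthogonal complex structure J (multiplication by i); the complex inner product
  is then  <x,y> = inner x y + i * inner x (J y)  (linear in the first argument),
  and complex scalar multiplication is (a + i b) x = a x + b J x.
\<close>

datatype scalar_field = Real_field | Complex_field

definition cplx_structure :: "('a::real_inner \<Rightarrow> 'a) \<Rightarrow> bool" where
  "cplx_structure J \<longleftrightarrow> linear J \<and> (\<forall>x. J (J x) = - x) \<and> (\<forall>x y. inner (J x) (J y) = inner x y)"

definition admissible :: "scalar_field \<Rightarrow> ('a::real_inner \<Rightarrow> 'a) \<Rightarrow> bool" where
  "admissible F J \<longleftrightarrow> (F = Complex_field \<longrightarrow> cplx_structure J)"

definition scal :: "scalar_field \<Rightarrow> complex set" where
  "scal F = (case F of Real_field \<Rightarrow> \<real> | Complex_field \<Rightarrow> UNIV)"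

definition smul :: "scalar_field \<Rightarrow> ('a::real_vector \<Rightarrow> 'a) \<Rightarrow> complex \<Rightarrow> 'a \<Rightarrow> 'a" where
  "smul F J c x = (case F of Real_field \<Rightarrow> Re c *\<^sub>R x
                            | Complex_field \<Rightarrow> Re c *\<^sub>R x + Im c *\<^sub>R J x)"

definition hip :: "scalar_field \<Rightarrow> ('a::real_inner \<Rightarrow> 'a) \<Rightarrow> 'a \<Rightarrow> 'a \<Rightarrow> complex" where
  "hip F J x y = (case F of Real_field \<Rightarrow> complex_of_real (inner x y)
                           | Complex_field \<Rightarrow> Complex (inner x y) (inner x (J y)))"

definition bounded_op :: "scalar_field \<Rightarrow> ('a::real_inner \<Rightarrow> 'a) \<Rightarrow> ('a \<Rightarrow> 'a) \<Rightarrow> bool" where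
  "bounded_op F J T \<longleftrightarrow> bounded_linear T \<and> (\<forall>c\<in>scal F. \<forall>x. T (smul F J c x) = smul F J c (T x))"

definition self_adjoint_op :: "scalar_field \<Rightarrow> ('a::real_inner \<Rightarrow> 'a) \<Rightarrow> ('a \<Rightarrow> 'a) \<Rightarrow> bool" where
  "self_adjoint_op F J T \<longleftrightarrow> (\<forall>x y. hip F J (T x) y = hip F J x (T y))"

definition orthonormal_basis :: "scalar_field \<Rightarrow> ('a::real_inner \<Rightarrow> 'a) \<Rightarrow> (nat \<Rightarrow> 'a) \<Rightarrow> bool" where
  "orthonormal_basis F J e \<longleftrightarrow>
     (\<forall>i j. hip F J (e i) (e j) = (if i = j then 1 else 0)) \<and>
     (\<forall>x. (\<forall>j. hip F J x (e j) = 0) \<longrightarrow> x = 0)"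

definition hilbert_schmidt :: "scalar_field \<Rightarrow> ('a::real_inner \<Rightarrow> 'a) \<Rightarrow> ('a \<Rightarrow> 'a) \<Rightarrow> bool" where
  "hilbert_schmidt F J T \<longleftrightarrow> bounded_op F J T \<and>
     (\<exists>e. orthonormal_basis F J e \<and> summable (\<lambda>j. (norm (T (e j)))\<^sup>2))"

definition is_frame :: "scalar_field \<Rightarrow> ('a::real_inner \<Rightarrow> 'a) \<Rightarrow> (nat \<Rightarrow> 'a) \<Rightarrow> bool" where
  "is_frame F J X \<longleftrightarrow> (\<exists>A B. 0 < A \<and> (\<forall>y.
      summable (\<lambda>k. (cmod (hip F J y (X k)))\<^sup>2) \<and>
      A * (norm y)\<^sup>2 \<le> (\<Sum>k. (cmod (hip F J y (X k)))\<^sup>2) \<and>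
      (\<Sum>k. (cmod (hip F J y (X k)))\<^sup>2) \<le> B * (norm y)\<^sup>2))"

definition injective_family :: "scalar_field \<Rightarrow> ('a::real_inner \<Rightarrow> 'a) \<Rightarrow> (nat \<Rightarrow> 'a) \<Rightarrow> bool" where
  "injective_family F J X \<longleftrightarrow> (\<forall>T. hilbert_schmidt F J T \<and> self_adjoint_op F J T \<and>
      (\<forall>k. hip F J (T (X k)) (X k) = 0) \<longrightarrow> (\<forall>x. T x = 0))"

definition l2_seqs :: "(nat \<Rightarrow> real) set" where
  "l2_seqs = {a. summable (\<lambda>j. (a j)\<^sup>2)}"

definition l2_norm :: "(nat \<Rightarrow> real) \<Rightarrow> real" where
  "l2_norm a = sqrt (\<Sum>j. (a j)\<^sup>2)"

definition l2_closed_span :: "(nat \<Rightarrow> nat \<Rightarrow> real) \<Rightarrow> (nat \<Rightarrow> real) set" where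
  "l2_closed_span v = {a \<in> l2_seqs. \<forall>\<epsilon>>0. \<exists>N c.
      (\<lambda>j. \<Sum>k<N. c k * v k j) \<in> l2_seqs \<and>
      l2_norm (\<lambda>j. a j - (\<Sum>k<N. c k * v k j)) < \<epsilon>}"

end

theory Submission
  imports Defs
begin

text \<open>Both implications go through eigenbases. A self-adjoint Hilbert--Schmidt operator T is
  compact, so (using separability and infinite dimension) it has an orthonormal eigenbasis f
  with square-summable eigenvalues a, and then the quadratic form at x_k is the l2-pairing of a
  with v_k = (|<x_k, f_j>|^2)_j. Injectivity of the family thus says that no nonzero a in l2 is
  orthogonal to every v_k: for (1) => (2) take the diagonal operator with eigenvalues a in the
  given basis, for (2) => (1) the eigenbasis of T. By the projection theorem in l2, the absence
  of such an a is exactly the density of the span of the v_k.\<close>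

section \<open>Inner product and scalar multiplication over the scalar field\<close>

lemma cplx_structureD:
  assumes "cplx_structure J"
  shows "linear J" "J (J x) = - x" "inner (J x) (J y) = inner x y"
    "inner (J x) y = - inner x (J y)" "inner x (J x) = 0" "norm (J x) = norm x"
proof -
  show "linear J" "J (J x) = - x" and JJ: "\<And>x y. inner (J x) (J y) = inner x y"
    using assms by (simp_all add: cplx_structure_def)
  have J_left: "inner (J a) b = - inner a (J b)" for a b
    using JJ[of "J a" b] assms by (simp add: cplx_structure_def)
  then show "inner (J x) y = - inner x (J y)" .
  show "inner x (J x) = 0" using J_left[of x x] by (simp add: inner_commute)
  show "norm (J x) = norm x" using JJ[of x x] by (simp add: norm_eq_sqrt_inner)
qed

locale hilbert_space =
  fixes F :: scalar_field and J :: "'a::{real_inner,complete_space} \<Rightarrow> 'a"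
  assumes admissible: "admissible F J"
begin

lemma cplx_structure: "F = Complex_field \<Longrightarrow> cplx_structure J"
  using admissible by (simp add: admissible_def)

lemma J_linear: "F = Complex_field \<Longrightarrow> linear J"
  using cplx_structureD(1)[OF cplx_structure] .

lemma J_add: "F = Complex_field \<Longrightarrow> J (x + y) = J x + J y"
  by (simp add: J_linear linear_add)
lemma J_diff: "F = Complex_field \<Longrightarrow> J (x - y) = J x - J y"
  by (simp add: J_linear linear_diff)
lemma J_scaleR: "F = Complex_field \<Longrightarrow> J (r *\<^sub>R x) = r *\<^sub>R J x"
  by (simp add: J_linear linear_scale)
lemma J_zero: "F = Complex_field \<Longrightarrow> J 0 = 0"
  by (simp add: J_linear linear_0)

lemma Re_hip: "Re (hip F J x y) = inner x y"
  by (cases F) (auto simp: hip_def)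

lemma hip_self: "hip F J x x = complex_of_real ((norm x)\<^sup>2)"
  by (cases F)
     (auto simp: hip_def cplx_structureD[OF cplx_structure] power2_norm_eq_inner complex_eq_iff)

lemma hip_commute: "hip F J y x = cnj (hip F J x y)"
proof (cases F)
  case Complex_field
  have "inner y (J x) = - inner x (J y)"
    using cplx_structureD(4)[OF cplx_structure[OF Complex_field], of y x]
    by (simp add: inner_commute)
  then show ?thesis using Complex_field by (simp add: hip_def inner_commute complex_eq_iff)
qed (simp add: hip_def inner_commute)

lemma hip_add_left: "hip F J (x + z) y = hip F J x y + hip F J z y"
  by (cases F) (auto simp: hip_def inner_add_left complex_eq_iff)
lemma hip_add_right: "hip F J y (x + z) = hip F J y x + hip F J y z"
  by (cases F) (auto simp: hip_def inner_add_right J_add complex_eq_iff)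
lemma hip_diff_left: "hip F J (x - z) y = hip F J x y - hip F J z y"
  by (cases F) (auto simp: hip_def inner_diff_left complex_eq_iff)
lemma hip_diff_right: "hip F J y (x - z) = hip F J y x - hip F J y z"
  by (cases F) (auto simp: hip_def inner_diff_right J_diff complex_eq_iff)
lemma hip_zero_left [simp]: "hip F J 0 y = 0"
  by (cases F) (auto simp: hip_def complex_eq_iff)
lemma hip_zero_right [simp]: "hip F J y 0 = 0"
  by (cases F) (auto simp: hip_def J_zero complex_eq_iff)
lemma hip_scaleR_left: "hip F J (r *\<^sub>R x) y = of_real r * hip F J x y"
  by (cases F) (auto simp: hip_def complex_eq_iff)
lemma hip_scaleR_right: "hip F J y (r *\<^sub>R x) = of_real r * hip F J y x"
  by (cases F) (auto simp: hip_def complex_eq_iff J_scaleR)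
lemma hip_sum_left: "hip F J (\<Sum>i\<in>S. f i) y = (\<Sum>i\<in>S. hip F J (f i) y)"
  by (induction S rule: infinite_finite_induct) (auto simp: hip_add_left)
lemma hip_sum_right: "hip F J y (\<Sum>i\<in>S. f i) = (\<Sum>i\<in>S. hip F J y (f i))"
  by (induction S rule: infinite_finite_induct) (auto simp: hip_add_right)

lemma hip_in_scal [simp]: "hip F J x y \<in> scal F"
  by (cases F) (auto simp: scal_def hip_def)
lemma of_real_in_scal [simp]: "complex_of_real r \<in> scal F"
  by (cases F) (auto simp: scal_def)
lemma scal_mult: "c \<in> scal F \<Longrightarrow> d \<in> scal F \<Longrightarrow> c * d \<in> scal F"
  by (cases F) (auto simp: scal_def)

lemma hip_smul_left:
  assumes "c \<in> scal F" shows "hip F J (smul F J c x) y = c * hip F J x y"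
proof (cases F)
  case Real_field
  with assms have "c = of_real (Re c)" by (auto simp: scal_def complex_is_Real_iff complex_eq_iff)
  then show ?thesis using Real_field by (auto simp: hip_def smul_def complex_eq_iff)
next
  case Complex_field
  then show ?thesis
    by (simp add: hip_def smul_def complex_eq_iff inner_add_left
        cplx_structureD[OF cplx_structure[OF Complex_field]])
qed

lemma hip_smul_right:
  "c \<in> scal F \<Longrightarrow> hip F J y (smul F J c x) = cnj c * hip F J y x"
  using hip_smul_left[of c x y] by (metis complex_cnj_mult hip_commute)

lemma smul_add: "smul F J c (x + y) = smul F J c x + smul F J c y"
  by (cases F) (auto simp: smul_def J_add scaleR_add_right)
lemma smul_zero [simp]: "smul F J c 0 = 0"
  by (cases F) (auto simp: smul_def J_zero)
lemma smul_of_real [simp]: "smul F J (complex_of_real r) x = r *\<^sub>R x"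
  by (cases F) (auto simp: smul_def)

lemma bounded_op_imp_bounded_linear: "bounded_op F J T \<Longrightarrow> bounded_linear T"
  by (simp add: bounded_op_def)

lemma norm_smul:
  assumes "c \<in> scal F" shows "norm (smul F J c x) = cmod c * norm x"
proof -
  have "(norm (smul F J c x))\<^sup>2 = Re (hip F J (smul F J c x) (smul F J c x))"
    by (simp add: hip_self)
  also have "\<dots> = Re (c * cnj c * complex_of_real ((norm x)\<^sup>2))"
    by (subst hip_smul_left[OF assms], subst hip_smul_right[OF assms]) (simp only: hip_self mult.assoc)
  also have "\<dots> = (cmod c * norm x)\<^sup>2"
    by (simp only: complex_mult_cnj) (simp del: of_real_power add: cmod_power2 power_mult_distrib)
  finally show ?thesis by (simp add: power2_eq_iff_nonneg)
qed

text \<open>Cauchy--Schwarz: rotate y by a unimodular scalar so that the inner product becomes real.\<close>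
lemma norm_hip_le: "cmod (hip F J x y) \<le> norm x * norm y"
proof (cases "hip F J x y = 0")
  case False
  define w where "w = hip F J x y / complex_of_real (cmod (hip F J x y))"
  have w: "w \<in> scal F" unfolding w_def by (cases F) (auto simp: hip_def scal_def)
  have unit: "cmod w = 1" using False by (simp add: w_def norm_divide)
  have "hip F J x (smul F J w y) = cnj w * hip F J x y" by (rule hip_smul_right[OF w])
  also have "\<dots> = complex_of_real (cmod (hip F J x y))"
    using False unfolding w_def
    by (simp add: complex_mult_cnj divide_simps cmod_power2 power2_eq_square complex_eq_iff)
       (simp add: cmod_def power2_eq_square)
  finally have "cmod (hip F J x y) = inner x (smul F J w y)"
    by (metis Re_hip Re_complex_of_real)
  also have "\<dots> \<le> norm x * norm (smul F J w y)"
    using Cauchy_Schwarz_ineq2 abs_ge_self order_trans by blast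
  also have "\<dots> = norm x * norm y" by (simp add: norm_smul w unit)
  finally show ?thesis .
qed simp

lemma bounded_bilinear_hip: "bounded_bilinear (hip F J)"
proof (rule bounded_bilinear.intro)
  show "\<exists>K. \<forall>a b. norm (hip F J a b) \<le> norm a * norm b * K"
    using norm_hip_le by (intro exI[of _ 1]) auto
qed (auto simp: hip_add_left hip_add_right hip_scaleR_left hip_scaleR_right scaleR_conv_of_real)

lemmas tendsto_hip [tendsto_intros] = bounded_bilinear.tendsto[OF bounded_bilinear_hip]

lemma continuous_on_hip_left: "continuous_on S (\<lambda>x. hip F J x y)"
  by (intro linear_continuous_on bounded_bilinear.bounded_linear_left[OF bounded_bilinear_hip])

end

section \<open>Orthonormal families, Bessel and Parseval\<close>

lemma summable_CauchyI:
  fixes v :: "nat \<Rightarrow> 'a::{real_normed_vector, complete_space}"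
  assumes "\<And>e. e > 0 \<Longrightarrow> \<exists>N. \<forall>m\<ge>N. \<forall>n. norm (sum v {m..<n}) < e"
  shows "summable v"
  unfolding summable_iff_convergent Cauchy_convergent_iff[symmetric]
proof (rule metric_CauchyI)
  fix e :: real assume "e > 0"
  then obtain N where N: "\<And>m n. m \<ge> N \<Longrightarrow> norm (sum v {m..<n}) < e" using assms by blast
  have split: "a \<le> b \<Longrightarrow> (\<Sum>i<b. v i) - (\<Sum>i<a. v i) = sum v {a..<b}" for a b
    by (metis add_diff_cancel_left' atLeast0LessThan le0 sum.atLeastLessThan_concat)
  show "\<exists>M. \<forall>m\<ge>M. \<forall>n\<ge>M. dist (\<Sum>i<m. v i) (\<Sum>i<n. v i) < e"
  proof (intro exI allI impI)
    fix m n assume "m \<ge> N" "n \<ge> N"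
    then show "dist (\<Sum>i<m. v i) (\<Sum>i<n. v i) < e"
      using N split[of m n] split[of n m]
      by (cases "m \<le> n") (auto simp: dist_norm norm_minus_commute[of "sum v {..<m}"])
  qed
qed

definition orthonormal_or_zero :: "scalar_field \<Rightarrow> ('a::real_inner \<Rightarrow> 'a) \<Rightarrow> (nat \<Rightarrow> 'a) \<Rightarrow> bool" where
  "orthonormal_or_zero F J u \<longleftrightarrow>
     (\<forall>i j. i \<noteq> j \<longrightarrow> hip F J (u i) (u j) = 0) \<and> (\<forall>i. u i = 0 \<or> norm (u i) = 1)"

definition synthesis :: "scalar_field \<Rightarrow> ('a::real_inner \<Rightarrow> 'a) \<Rightarrow> (nat \<Rightarrow> 'a) \<Rightarrow> (nat \<Rightarrow> complex) \<Rightarrow> 'a" where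
  "synthesis F J u c = (\<Sum>j. smul F J (c j) (u j))"

context hilbert_space
begin

lemma orthonormal_or_zero_hip:
  "orthonormal_or_zero F J u \<Longrightarrow> hip F J (u i) (u j) = (if i = j \<and> u i \<noteq> 0 then 1 else 0)"
  by (auto simp: orthonormal_or_zero_def hip_self)

lemma hip_sum_smul_left:
  assumes u: "orthonormal_or_zero F J u" and c: "\<And>j. j \<in> S \<Longrightarrow> c j \<in> scal F" and S: "finite S"
  shows "hip F J (\<Sum>j\<in>S. smul F J (c j) (u j)) (u i) = (if i \<in> S \<and> u i \<noteq> 0 then c i else 0)"
proof -
  have "hip F J (\<Sum>j\<in>S. smul F J (c j) (u j)) (u i) = (\<Sum>j\<in>S. c j * hip F J (u j) (u i))"
    by (simp add: hip_sum_left hip_smul_left c)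
  also have "\<dots> = (\<Sum>j\<in>S. if j = i then (if u i \<noteq> 0 then c i else 0) else 0)"
    by (rule sum.cong) (auto simp: orthonormal_or_zero_hip[OF u])
  finally show ?thesis using S by (simp add: sum.delta')
qed

lemma hip_sum_smul_right:
  assumes "\<And>j. j \<in> S \<Longrightarrow> c j \<in> scal F"
  shows "hip F J y (\<Sum>j\<in>S. smul F J (c j) (u j)) = (\<Sum>j\<in>S. cnj (c j) * hip F J y (u j))"
  by (simp add: hip_sum_right hip_smul_right assms)

lemma norm_sum_smul_sq:
  assumes u: "orthonormal_or_zero F J u" and c: "\<And>j. j \<in> S \<Longrightarrow> c j \<in> scal F" and S: "finite S"
  shows "(norm (\<Sum>j\<in>S. smul F J (c j) (u j)))\<^sup>2 = (\<Sum>j\<in>S. if u j = 0 then 0 else (cmod (c j))\<^sup>2)"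
proof -
  let ?s = "\<Sum>j\<in>S. smul F J (c j) (u j)"
  have "(norm ?s)\<^sup>2 = Re (hip F J ?s ?s)" by (simp add: hip_self)
  also have "\<dots> = Re (\<Sum>j\<in>S. cnj (c j) * hip F J ?s (u j))"
    by (simp only: hip_sum_smul_right[of S c ?s u, OF c])
  also have "\<dots> = Re (\<Sum>j\<in>S. if u j = 0 then 0 else cnj (c j) * c j)"
    by (rule arg_cong[where f=Re], rule sum.cong) (auto simp: hip_sum_smul_left[OF u c S])
  also have "\<dots> = (\<Sum>j\<in>S. if u j = 0 then 0 else (cmod (c j))\<^sup>2)"
    unfolding Re_sum by (rule sum.cong) (auto simp: mult.commute[of "cnj _"] complex_norm_square[symmetric])
  finally show ?thesis .
qed

context
  fixes u c
  assumes u: "orthonormal_or_zero F J u" and c: "\<And>j. c j \<in> scal F"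
    and c_sq: "summable (\<lambda>j. (cmod (c j))\<^sup>2)"
begin

lemma synthesis_sums: "(\<lambda>j. smul F J (c j) (u j)) sums synthesis F J u c"
proof -
  have "summable (\<lambda>j. smul F J (c j) (u j))"
  proof (rule summable_CauchyI)
    fix e :: real assume e: "e > 0"
    then obtain N where N: "\<And>m n. m \<ge> N \<Longrightarrow> norm (\<Sum>j\<in>{m..<n}. (cmod (c j))\<^sup>2) < e\<^sup>2"
      using c_sq[unfolded summable_Cauchy] by (metis zero_less_power)
    show "\<exists>N. \<forall>m\<ge>N. \<forall>n. norm (sum (\<lambda>j. smul F J (c j) (u j)) {m..<n}) < e"
    proof (intro exI allI impI)
      fix m n assume m: "m \<ge> N"
      have "(norm (\<Sum>j\<in>{m..<n}. smul F J (c j) (u j)))\<^sup>2 \<le> (\<Sum>j\<in>{m..<n}. (cmod (c j))\<^sup>2)"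
        by (subst norm_sum_smul_sq[OF u]) (auto simp: c intro: sum_mono)
      also have "\<dots> < e\<^sup>2" using N[OF m, of n] by (simp add: sum_nonneg)
      finally show "norm (\<Sum>j\<in>{m..<n}. smul F J (c j) (u j)) < e"
        by (rule power2_less_imp_less) (use e in auto)
    qed
  qed
  then show ?thesis unfolding synthesis_def by (rule summable_sums)
qed

lemma synthesis_partial_sums: "(\<lambda>n. \<Sum>j<n. smul F J (c j) (u j)) \<longlonglongrightarrow> synthesis F J u c"
  using synthesis_sums by (simp add: sums_def)

lemma hip_synthesis_left_sums: "(\<lambda>j. c j * hip F J (u j) y) sums hip F J (synthesis F J u c) y"
  using tendsto_hip[OF synthesis_partial_sums tendsto_const[of y]]
  by (simp add: sums_def hip_sum_left hip_smul_left c)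

lemma hip_synthesis_right_sums: "(\<lambda>j. cnj (c j) * hip F J y (u j)) sums hip F J y (synthesis F J u c)"
  using tendsto_hip[OF tendsto_const[of y] synthesis_partial_sums]
  by (simp add: sums_def hip_sum_right hip_smul_right c)

lemma hip_synthesis_coeff: "hip F J (synthesis F J u c) (u i) = (if u i = 0 then 0 else c i)"
proof -
  have "(\<lambda>j. c j * hip F J (u j) (u i)) = (\<lambda>j. if j = i then (if u i = 0 then 0 else c i) else 0)"
    by (auto simp: orthonormal_or_zero_hip[OF u])
  then have "(\<lambda>j. if j = i then (if u i = 0 then 0 else c i) else 0)
      sums hip F J (synthesis F J u c) (u i)"
    using hip_synthesis_left_sums[of "u i"] by simp
  then show ?thesis using sums_single[of i "\<lambda>_. if u i = 0 then 0 else c i"] sums_unique2 by blast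
qed

lemma norm_synthesis_sums:
  "(\<lambda>j. if u j = 0 then 0 else (cmod (c j))\<^sup>2) sums (norm (synthesis F J u c))\<^sup>2"
  using tendsto_power[OF tendsto_norm[OF synthesis_partial_sums], of 2]
  by (simp add: sums_def norm_sum_smul_sq[OF u] c)

end

lemma bessel_inequality_finite:
  assumes u: "orthonormal_or_zero F J u"
  shows "(\<Sum>j<n. (cmod (hip F J x (u j)))\<^sup>2) \<le> (norm x)\<^sup>2"
proof -
  define c where "c j = hip F J x (u j)" for j
  define s where "s = (\<Sum>j<n. smul F J (c j) (u j))"
  have hip_s: "hip F J s (u i) = (if i < n \<and> u i \<noteq> 0 then c i else 0)" for i
    unfolding s_def by (subst hip_sum_smul_left[OF u]) (auto simp: c_def)
  have "hip F J (x - s) s = (\<Sum>j<n. cnj (c j) * hip F J (x - s) (u j))"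
    unfolding s_def[symmetric] by (subst (2) s_def, rule hip_sum_smul_right) (simp add: c_def)
  also have "\<dots> = 0"
    by (rule sum.neutral) (auto simp: hip_diff_left hip_s c_def)
  finally have "inner (x - s) s = 0" by (metis Re_hip zero_complex.sel(1))
  then have "(norm x)\<^sup>2 = (norm (x - s))\<^sup>2 + (norm s)\<^sup>2"
    using dot_norm[of "x - s" s] by simp
  moreover have "(norm s)\<^sup>2 = (\<Sum>j<n. (cmod (c j))\<^sup>2)"
    unfolding s_def by (subst norm_sum_smul_sq[OF u]) (auto simp: c_def intro!: sum.cong)
  ultimately show ?thesis by (simp add: c_def)
qed

lemma bessel_summable:
  "orthonormal_or_zero F J u \<Longrightarrow> summable (\<lambda>j. (cmod (hip F J x (u j)))\<^sup>2)"
  by (rule summableI_nonneg_bounded[where x="(norm x)\<^sup>2"]) (auto simp: bessel_inequality_finite)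

lemma projection_residual_orthogonal:
  assumes u: "orthonormal_or_zero F J u"
  shows "hip F J (x - synthesis F J u (\<lambda>j. hip F J x (u j))) (u i) = 0"
  using hip_synthesis_coeff[OF u _ bessel_summable[OF u]] by (simp add: hip_diff_left)

lemma orthonormal_basis_hip:
  "orthonormal_basis F J e \<Longrightarrow> hip F J (e i) (e j) = (if i = j then 1 else 0)"
  by (simp add: orthonormal_basis_def)

lemma orthonormal_basis_eqI:
  assumes "orthonormal_basis F J e" and "\<And>j. hip F J x (e j) = hip F J y (e j)"
  shows "x = y"
proof -
  have "\<forall>j. hip F J (x - y) (e j) = 0" by (simp add: hip_diff_left assms(2))
  then have "x - y = 0" using assms(1) unfolding orthonormal_basis_def by blast
  then show ?thesis by simp
qed

lemma orthonormal_basis_nonzero: "orthonormal_basis F J e \<Longrightarrow> e i \<noteq> 0"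
  using orthonormal_basis_hip[of e i i] by auto

lemma norm_orthonormal_basis:
  assumes "orthonormal_basis F J e" shows "norm (e i) = 1"
proof -
  have "complex_of_real ((norm (e i))\<^sup>2) = 1"
    using orthonormal_basis_hip[OF assms, of i i] by (simp only: hip_self) simp
  then have "(norm (e i))\<^sup>2 = 1\<^sup>2" by (simp only: of_real_eq_1_iff power_one)
  then show ?thesis by (simp only: power2_eq_iff_nonneg norm_ge_zero zero_le_one)
qed

lemma orthonormal_basis_imp_orthonormal_or_zero:
  "orthonormal_basis F J e \<Longrightarrow> orthonormal_or_zero F J e"
  by (simp add: orthonormal_or_zero_def orthonormal_basis_hip norm_orthonormal_basis)

context
  fixes e assumes e: "orthonormal_basis F J e"
begin

lemma orthonormal_basis_expansion: "synthesis F J e (\<lambda>j. hip F J x (e j)) = x"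
  by (rule orthonormal_basis_eqI[OF e])
     (simp add: hip_synthesis_coeff[OF orthonormal_basis_imp_orthonormal_or_zero[OF e] _
       bessel_summable[OF orthonormal_basis_imp_orthonormal_or_zero[OF e]]]
       orthonormal_basis_nonzero[OF e])

lemma parseval_sums: "(\<lambda>j. (cmod (hip F J x (e j)))\<^sup>2) sums (norm x)\<^sup>2"
  using norm_synthesis_sums[OF orthonormal_basis_imp_orthonormal_or_zero[OF e] _
      bessel_summable[OF orthonormal_basis_imp_orthonormal_or_zero[OF e]], of x]
  by (simp add: orthonormal_basis_expansion orthonormal_basis_nonzero[OF e])

lemma parseval_hip_sums: "(\<lambda>j. hip F J x (e j) * cnj (hip F J y (e j))) sums hip F J x y"
  using hip_synthesis_left_sums[OF orthonormal_basis_imp_orthonormal_or_zero[OF e] _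
      bessel_summable[OF orthonormal_basis_imp_orthonormal_or_zero[OF e]], of x y]
  by (simp add: orthonormal_basis_expansion hip_commute[of "e _" y])

lemma orthonormal_basis_expansion_sums: "(\<lambda>j. smul F J (hip F J x (e j)) (e j)) sums x"
  using synthesis_sums[OF orthonormal_basis_imp_orthonormal_or_zero[OF e] _
      bessel_summable[OF orthonormal_basis_imp_orthonormal_or_zero[OF e]], of x]
  by (simp add: orthonormal_basis_expansion)

end

end

section \<open>Gram--Schmidt orthonormalisation\<close>

definition scal_subspace :: "scalar_field \<Rightarrow> ('a::real_vector \<Rightarrow> 'a) \<Rightarrow> 'a set \<Rightarrow> bool" where
  "scal_subspace F J S \<longleftrightarrow>
     0 \<in> S \<and> (\<forall>x\<in>S. \<forall>y\<in>S. x + y \<in> S) \<and> (\<forall>c\<in>scal F. \<forall>x\<in>S. smul F J c x \<in> S)"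

lemma scal_subspace_Real_field: "subspace S \<Longrightarrow> scal_subspace Real_field J S"
  by (simp add: scal_subspace_def smul_def subspace_0 subspace_add subspace_scale)

function gram_schmidt :: "scalar_field \<Rightarrow> ('a::real_inner \<Rightarrow> 'a) \<Rightarrow> (nat \<Rightarrow> 'a) \<Rightarrow> nat \<Rightarrow> 'a" where
  "gram_schmidt F J s n = sgn (s n -
     (\<Sum>i<n. smul F J (hip F J (s n) (gram_schmidt F J s i)) (gram_schmidt F J s i)))"
  by auto
termination by (relation "Wellfounded.measure (\<lambda>(F, J, s, n). n)") auto

declare gram_schmidt.simps [simp del]

lemma norm_gram_schmidt: "gram_schmidt F J s n = 0 \<or> norm (gram_schmidt F J s n) = 1"
  using norm_sgn[of "s n - (\<Sum>i<n. smul F J (hip F J (s n) (gram_schmidt F J s i)) (gram_schmidt F J s i))"]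
  by (simp only: gram_schmidt.simps[symmetric]) auto

context hilbert_space
begin

lemma orthonormal_or_zero_gram_schmidt: "orthonormal_or_zero F J (gram_schmidt F J s)"
proof -
  let ?g = "gram_schmidt F J s"
  have "\<forall>j<n. hip F J (?g n) (?g j) = 0" for n
  proof (induction n rule: less_induct)
    case (less n)
    define u where "u j = (if j < n then ?g j else 0)" for j
    have u: "orthonormal_or_zero F J u"
      unfolding orthonormal_or_zero_def u_def
    proof (intro conjI allI impI)
      fix i j :: nat assume "i \<noteq> j"
      then show "hip F J (if i < n then ?g i else 0) (if j < n then ?g j else 0) = 0"
        using less[of i] less[of j] hip_commute[of "?g i" "?g j"] by (cases i j rule: linorder_cases) auto
    qed (auto simp: u_def norm_gram_schmidt)
    define r where "r = s n - (\<Sum>i<n. smul F J (hip F J (s n) (u i)) (u i))"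
    have "?g n = inverse (norm r) *\<^sub>R r"
      by (simp add: gram_schmidt.simps[of F J s n] r_def u_def sgn_div_norm)
    moreover have "hip F J r (u j) = 0" if "j < n" for j
      using that unfolding r_def hip_diff_left by (subst hip_sum_smul_left[OF u]) auto
    ultimately show ?case by (simp add: hip_scaleR_left u_def)
  qed
  then show ?thesis
    unfolding orthonormal_or_zero_def
    by (metis norm_gram_schmidt hip_commute complex_cnj_zero linorder_neqE_nat)
qed

lemma gram_schmidt_in_scal_subspace:
  assumes S: "scal_subspace F J S" and s: "\<And>i. i \<le> n \<Longrightarrow> s i \<in> S"
  shows "gram_schmidt F J s n \<in> S"
  using s
proof (induction n rule: less_induct)
  case (less n)
  have add: "x \<in> S \<Longrightarrow> y \<in> S \<Longrightarrow> x + y \<in> S" and smul: "c \<in> scal F \<Longrightarrow> x \<in> S \<Longrightarrow> smul F J c x \<in> S"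
    for x y c using S by (auto simp: scal_subspace_def)
  have sum: "(\<Sum>i\<in>A. f i) \<in> S" if "\<And>i. i \<in> A \<Longrightarrow> f i \<in> S" for A and f :: "nat \<Rightarrow> 'a"
    using that S by (induction A rule: infinite_finite_induct) (auto simp: scal_subspace_def add)
  have neg: "x \<in> S \<Longrightarrow> - x \<in> S" for x
    using smul[OF of_real_in_scal[of "-1"], of x] by (simp only: smul_of_real scaleR_minus1_left)
  define r where "r = s n - (\<Sum>i<n. smul F J (hip F J (s n) (gram_schmidt F J s i)) (gram_schmidt F J s i))"
  have "r \<in> S"
    unfolding r_def diff_conv_add_uminus using less by (intro add neg sum smul) auto
  then have "smul F J (complex_of_real (inverse (norm r))) r \<in> S" by (rule smul[OF of_real_in_scal])
  then have "inverse (norm r) *\<^sub>R r \<in> S" by (simp only: smul_of_real)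
  then show ?case by (simp add: gram_schmidt.simps[of F J s n] r_def[symmetric] sgn_div_norm)
qed

lemma orthogonal_gram_schmidt_imp_orthogonal:
  assumes "\<And>i. hip F J x (gram_schmidt F J s i) = 0"
  shows "hip F J x (s n) = 0"
proof -
  define r where "r = s n - (\<Sum>i<n. smul F J (hip F J (s n) (gram_schmidt F J s i)) (gram_schmidt F J s i))"
  have "norm r *\<^sub>R gram_schmidt F J s n = r"
    by (cases "r = 0") (simp_all add: gram_schmidt.simps[of F J s n] r_def[symmetric] sgn_div_norm)
  then have eq: "s n = norm r *\<^sub>R gram_schmidt F J s n +
      (\<Sum>i<n. smul F J (hip F J (s n) (gram_schmidt F J s i)) (gram_schmidt F J s i))"
    by (simp add: r_def)
  show ?thesis
    by (subst eq) (simp add: hip_add_right hip_scaleR_right hip_sum_smul_right assms)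
qed

end

section \<open>The sequence space l2\<close>

lemma l2_seqs_add: "a \<in> l2_seqs \<Longrightarrow> b \<in> l2_seqs \<Longrightarrow> (\<lambda>j. a j + b j) \<in> l2_seqs"
  unfolding l2_seqs_def
proof (simp, rule summable_comparison_test)
  assume "summable (\<lambda>j. (a j)\<^sup>2)" "summable (\<lambda>j. (b j)\<^sup>2)"
  then show "summable (\<lambda>j. 2 * (a j)\<^sup>2 + 2 * (b j)\<^sup>2)" by (intro summable_add summable_mult)
  have "(a n + b n)\<^sup>2 \<le> 2 * (a n)\<^sup>2 + 2 * (b n)\<^sup>2" for n
    using zero_le_power2[of "a n - b n"] by (simp only: power2_diff power2_sum)
  then show "\<exists>N. \<forall>n\<ge>N. norm ((a n + b n)\<^sup>2) \<le> 2 * (a n)\<^sup>2 + 2 * (b n)\<^sup>2" by auto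
qed

lemma l2_seqs_scale: "a \<in> l2_seqs \<Longrightarrow> (\<lambda>j. c * a j) \<in> l2_seqs"
  unfolding l2_seqs_def by (simp add: power_mult_distrib summable_mult)

lemma l2_seqs_diff: "a \<in> l2_seqs \<Longrightarrow> b \<in> l2_seqs \<Longrightarrow> (\<lambda>j. a j - b j) \<in> l2_seqs"
  using l2_seqs_add[OF _ l2_seqs_scale[of b "-1"], of a] by simp

lemma l2_seqs_sum:
  fixes N :: nat shows "(\<And>k. k < N \<Longrightarrow> v k \<in> l2_seqs) \<Longrightarrow> (\<lambda>j. \<Sum>k<N. c k * v k j) \<in> l2_seqs"
proof (induction N)
  case 0 then show ?case by (simp add: l2_seqs_def)
next
  case (Suc N)
  then show ?case using l2_seqs_add[OF Suc.IH l2_seqs_scale[OF Suc.prems[of N]], of "c N"] by simp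
qed

lemma l2_norm_nonneg: "a \<in> l2_seqs \<Longrightarrow> 0 \<le> l2_norm a"
  by (simp add: l2_norm_def l2_seqs_def suminf_nonneg)

lemma l2_norm_sq: "a \<in> l2_seqs \<Longrightarrow> (l2_norm a)\<^sup>2 = (\<Sum>j. (a j)\<^sup>2)"
  by (simp add: l2_norm_def l2_seqs_def suminf_nonneg)

lemma abs_le_l2_norm: assumes "a \<in> l2_seqs" shows "\<bar>a j\<bar> \<le> l2_norm a"
proof -
  have "(a j)\<^sup>2 \<le> (\<Sum>j. (a j)\<^sup>2)"
    using sum_le_suminf[of "\<lambda>j. (a j)\<^sup>2" "{j}"] assms by (simp add: l2_seqs_def)
  then show ?thesis
    using assms by (simp add: l2_norm_def real_le_rsqrt)
qed

lemma sq_le_l2_norm_sq: "a \<in> l2_seqs \<Longrightarrow> (a j)\<^sup>2 \<le> (l2_norm a)\<^sup>2"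
  using power_mono[OF abs_le_l2_norm abs_ge_zero, of a j 2] by simp

lemma l2_summable_mult:
  assumes "a \<in> l2_seqs" "b \<in> l2_seqs" shows "summable (\<lambda>j. a j * b j)"
proof (rule summable_comparison_test)
  show "summable (\<lambda>j. (a j)\<^sup>2 + (b j)\<^sup>2)"
    using assms by (intro summable_add) (auto simp: l2_seqs_def)
  have "\<bar>a n\<bar> * \<bar>b n\<bar> \<le> (a n)\<^sup>2 + (b n)\<^sup>2" for n
  proof -
    have "2 * (\<bar>a n\<bar> * \<bar>b n\<bar>) \<le> (a n)\<^sup>2 + (b n)\<^sup>2"
      using zero_le_power2[of "\<bar>a n\<bar> - \<bar>b n\<bar>"] by (simp add: power2_diff power2_abs)
    then show ?thesis using zero_le_mult_iff[of "\<bar>a n\<bar>" "\<bar>b n\<bar>"] by linarith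
  qed
  then show "\<exists>N. \<forall>n\<ge>N. norm (a n * b n) \<le> (a n)\<^sup>2 + (b n)\<^sup>2" by (auto simp: abs_mult)
qed

lemma abs_suminf_mult_le_l2_norm:
  assumes a: "a \<in> l2_seqs" and b: "b \<in> l2_seqs"
  shows "\<bar>\<Sum>j. a j * b j\<bar> \<le> l2_norm a * l2_norm b"
proof (rule LIMSEQ_le_const2)
  show "(\<lambda>n. \<bar>\<Sum>j<n. a j * b j\<bar>) \<longlonglongrightarrow> \<bar>\<Sum>j. a j * b j\<bar>"
    by (intro tendsto_intros summable_LIMSEQ l2_summable_mult a b)
  have sa: "summable (\<lambda>j. (a j)\<^sup>2)" and sb: "summable (\<lambda>j. (b j)\<^sup>2)"
    using a b by (auto simp: l2_seqs_def)
  have "\<bar>\<Sum>j<n. a j * b j\<bar>\<^sup>2 \<le> (l2_norm a * l2_norm b)\<^sup>2" for n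
  proof -
    have "\<bar>\<Sum>j<n. a j * b j\<bar>\<^sup>2 \<le> (\<Sum>j<n. (a j)\<^sup>2) * (\<Sum>j<n. (b j)\<^sup>2)"
      using Cauchy_Schwarz_ineq_sum by simp
    also have "\<dots> \<le> (\<Sum>j. (a j)\<^sup>2) * (\<Sum>j. (b j)\<^sup>2)"
      by (intro mult_mono sum_le_suminf sa sb) (auto intro: sum_nonneg suminf_nonneg sa sb)
    finally show ?thesis by (simp add: power_mult_distrib l2_norm_sq a b)
  qed
  then show "\<exists>N. \<forall>n\<ge>N. \<bar>\<Sum>j<n. a j * b j\<bar> \<le> l2_norm a * l2_norm b"
    by (meson a b l2_norm_nonneg mult_nonneg_nonneg power2_le_imp_le)
qed

text \<open>Every approximant w of a lies in the span of the v k, so a is orthogonal to it and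
  ||a||^2 = <a, a - w> <= ||a|| ||a - w||.\<close>
lemma l2_closed_span_orthogonal_eq_0:
  assumes a: "a \<in> l2_closed_span v" and orth: "\<And>k. (\<lambda>j. v k j * a j) sums 0"
  shows "a j = 0"
proof -
  have al2: "a \<in> l2_seqs" using a by (simp add: l2_closed_span_def)
  define A where "A = l2_norm a"
  have A0: "A \<ge> 0" by (simp add: A_def l2_norm_nonneg al2)
  have bnd: "A\<^sup>2 \<le> A * eps" if eps: "eps > 0" for eps
  proof -
    obtain N c where wl2: "(\<lambda>j. \<Sum>k<N. c k * v k j) \<in> l2_seqs"
      and close: "l2_norm (\<lambda>j. a j - (\<Sum>k<N. c k * v k j)) < eps"
      using a eps unfolding l2_closed_span_def by blast
    define w where "w j = (\<Sum>k<N. c k * v k j)" for j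
    have "(\<lambda>j. \<Sum>k<N. c k * (v k j * a j)) sums (\<Sum>k<N. c k * 0)"
      by (intro sums_sum sums_mult orth)
    then have aw: "(\<lambda>j. a j * w j) sums 0" by (simp add: w_def sum_distrib_left mult_ac)
    have dl2: "(\<lambda>j. a j - w j) \<in> l2_seqs" using l2_seqs_diff[OF al2 wl2] by (simp add: w_def)
    have "(\<lambda>j. a j * (a j - w j) + a j * w j) sums ((\<Sum>j. a j * (a j - w j)) + 0)"
      by (intro sums_add aw summable_sums l2_summable_mult[OF al2 dl2])
    then have "A\<^sup>2 = (\<Sum>j. a j * (a j - w j))"
      by (simp only: A_def l2_norm_sq[OF al2]) (simp add: algebra_simps power2_eq_square sums_iff)
    also have "\<dots> \<le> A * l2_norm (\<lambda>j. a j - w j)"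
      unfolding A_def using abs_suminf_mult_le_l2_norm[OF al2 dl2] by linarith
    also have "\<dots> \<le> A * eps" using close A0 by (intro mult_left_mono) (auto simp: w_def)
    finally show ?thesis .
  qed
  have "A = 0"
    using bnd[of "A / 2"] A0 by (cases "A = 0") (auto simp: power2_eq_square)
  then have "(\<Sum>j. (a j)\<^sup>2) = 0" using l2_norm_sq[OF al2] by (simp add: A_def)
  then show ?thesis using suminf_eq_zero_iff[of "\<lambda>j. (a j)\<^sup>2"] al2 by (simp add: l2_seqs_def)
qed

lemma span_image_eq_sum:
  assumes "x \<in> span (s ` A)" "finite A"
  shows "\<exists>d. x = (\<Sum>k\<in>A. d k *\<^sub>R s k)"
  using assms(1)
proof (induction rule: span_induct_alt)
  case base then show ?case by (intro exI[of _ "\<lambda>_. 0"]) simp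
next
  case (step c x y)
  then obtain d k0 where d: "y = (\<Sum>k\<in>A. d k *\<^sub>R s k)" and k0: "k0 \<in> A" "x = s k0" by blast
  have "c *\<^sub>R x + y = (\<Sum>k\<in>A. ((if k = k0 then c else 0) + d k) *\<^sub>R s k)"
    using k0 assms(2)
    by (simp add: d scaleR_add_left sum.distrib if_distrib[of "\<lambda>t. t *\<^sub>R _"] sum.delta' cong: if_cong)
  then show ?case by (intro exI[of _ "\<lambda>k. (if k = k0 then c else 0) + d k"])
qed

definition l2_synthesis :: "(nat \<Rightarrow> 'a::real_normed_vector) \<Rightarrow> (nat \<Rightarrow> real) \<Rightarrow> 'a" where
  "l2_synthesis e a = (\<Sum>j. a j *\<^sub>R e j)"

lemma hilbert_space_Real_field: "hilbert_space Real_field J"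
  by unfold_locales (simp add: admissible_def)

context
  fixes e :: "nat \<Rightarrow> 'a::{real_inner,complete_space}"
  assumes e: "\<And>i j. inner (e i) (e j) = (if i = j then 1 else 0)"
begin

interpretation R: hilbert_space Real_field "id :: 'a \<Rightarrow> 'a"
  by (rule hilbert_space_Real_field)

lemma orthonormal_or_zero_Real_field: "orthonormal_or_zero Real_field id e"
  using e[of _ _] by (auto simp: orthonormal_or_zero_def hip_def norm_eq_sqrt_inner)

lemma l2_synthesis_eq: "l2_synthesis e a = synthesis Real_field id e (\<lambda>j. complex_of_real (a j))"
  by (simp add: l2_synthesis_def synthesis_def)

lemma l2_synthesis_sums: "a \<in> l2_seqs \<Longrightarrow> (\<lambda>j. a j *\<^sub>R e j) sums l2_synthesis e a"
  using R.synthesis_sums[OF orthonormal_or_zero_Real_field, of "\<lambda>j. complex_of_real (a j)"]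
  by (simp add: l2_synthesis_eq l2_seqs_def)

lemma norm_l2_synthesis: assumes "a \<in> l2_seqs" shows "norm (l2_synthesis e a) = l2_norm a"
proof -
  have "e j \<noteq> 0" for j using e[of j j] by auto
  then have "(\<lambda>j. (a j)\<^sup>2) sums (norm (l2_synthesis e a))\<^sup>2"
    using R.norm_synthesis_sums[OF orthonormal_or_zero_Real_field, of "\<lambda>j. complex_of_real (a j)"] assms
    by (simp add: l2_synthesis_eq l2_seqs_def)
  then show ?thesis by (simp add: l2_norm_def sums_iff)
qed

lemma inner_l2_synthesis_sums:
  "a \<in> l2_seqs \<Longrightarrow> (\<lambda>j. a j * inner y (e j)) sums inner y (l2_synthesis e a)"
  using tendsto_inner[OF tendsto_const[of y] l2_synthesis_sums[unfolded sums_def]]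
  by (simp add: sums_def inner_sum_right)

lemma l2_synthesis_diff:
  assumes "a \<in> l2_seqs" "b \<in> l2_seqs"
  shows "l2_synthesis e (\<lambda>j. a j - b j) = l2_synthesis e a - l2_synthesis e b"
  using sums_diff[OF l2_synthesis_sums[OF assms(1)] l2_synthesis_sums[OF assms(2)]]
    l2_synthesis_sums[OF l2_seqs_diff[OF assms]]
  by (simp add: scaleR_diff_left sums_unique2)

lemma l2_synthesis_sum:
  fixes N :: nat
  assumes "\<And>k. k < N \<Longrightarrow> w k \<in> l2_seqs"
  shows "l2_synthesis e (\<lambda>j. \<Sum>k<N. d k * w k j) = (\<Sum>k<N. d k *\<^sub>R l2_synthesis e (w k))"
proof -
  have "(\<lambda>j. \<Sum>k<N. d k *\<^sub>R (w k j *\<^sub>R e j)) sums (\<Sum>k<N. d k *\<^sub>R l2_synthesis e (w k))"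
    by (intro sums_sum sums_scaleR_right l2_synthesis_sums assms) auto
  moreover have "(\<lambda>j. (\<Sum>k<N. d k * w k j) *\<^sub>R e j) sums l2_synthesis e (\<lambda>j. \<Sum>k<N. d k * w k j)"
    by (rule l2_synthesis_sums[OF l2_seqs_sum[OF assms]])
  ultimately show ?thesis by (simp add: scaleR_sum_left sums_unique2)
qed

lemma l2_closed_span_memI:
  assumes v: "\<And>k. v k \<in> l2_seqs" and b: "b \<in> l2_seqs"
    and approx: "\<And>eps. eps > 0 \<Longrightarrow>
      \<exists>n. \<exists>w\<in>span ((\<lambda>k. l2_synthesis e (v k)) ` {..<n}). norm (l2_synthesis e b - w) < eps"
  shows "b \<in> l2_closed_span v"
  unfolding l2_closed_span_def
proof (intro CollectI conjI b allI impI)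
  fix eps :: real assume "eps > 0"
  then obtain n w where w: "w \<in> span ((\<lambda>k. l2_synthesis e (v k)) ` {..<n})"
    and close: "norm (l2_synthesis e b - w) < eps"
    using approx by blast
  obtain d where d: "w = (\<Sum>k<n. d k *\<^sub>R l2_synthesis e (v k))"
    using span_image_eq_sum[OF w] by auto
  have comb: "(\<lambda>j. \<Sum>k<n. d k * v k j) \<in> l2_seqs" by (rule l2_seqs_sum[OF v])
  have "l2_norm (\<lambda>j. b j - (\<Sum>k<n. d k * v k j)) = norm (l2_synthesis e b - w)"
    by (simp add: norm_l2_synthesis[symmetric] l2_seqs_diff[OF b comb] l2_synthesis_diff[OF b comb]
        l2_synthesis_sum v d)
  with comb close show "\<exists>N c. (\<lambda>j. \<Sum>k<N. c k * v k j) \<in> l2_seqs \<and>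
      l2_norm (\<lambda>j. b j - (\<Sum>k<N. c k * v k j)) < eps"
    by (intro exI[of _ n] exI[of _ d] conjI) simp_all
qed

lemma gram_schmidt_partial_sum_in_span:
  fixes s :: "nat \<Rightarrow> 'a"
  shows "(\<Sum>i<n. smul Real_field id (c i) (gram_schmidt Real_field id s i)) \<in> span (s ` {..<n})"
proof -
  have "gram_schmidt Real_field id s i \<in> span (s ` {..<n})" if "i < n" for i
    using that by (intro R.gram_schmidt_in_scal_subspace scal_subspace_Real_field) (auto intro: span_base)
  then show ?thesis by (auto simp: smul_def intro!: span_sum span_scale)
qed

text \<open>The projection theorem in l2, proved in the isometric copy spanned by e: Gram--Schmidt
  on the images of the v k gives the projection of the image of b, and the coefficients of the
  residual form a sequence orthogonal to every v k.\<close>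
lemma l2_closed_span_eq_l2_seqsI:
  assumes v: "\<And>k. v k \<in> l2_seqs"
    and orth: "\<And>a. a \<in> l2_seqs \<Longrightarrow> (\<And>k. (\<lambda>j. v k j * a j) sums 0) \<Longrightarrow> a = (\<lambda>_. 0)"
  shows "l2_closed_span v = l2_seqs"
proof (intro equalityI subsetI)
  fix b assume b: "b \<in> l2_seqs"
  define s where "s k = l2_synthesis e (v k)" for k
  define g where "g = gram_schmidt Real_field id s"
  have g: "orthonormal_or_zero Real_field id g" unfolding g_def by (rule R.orthonormal_or_zero_gram_schmidt)
  define c where "c i = hip Real_field id (l2_synthesis e b) (g i)" for i
  have cs: "c i \<in> scal Real_field" for i by (simp add: c_def)
  have c_sq: "summable (\<lambda>i. (cmod (c i))\<^sup>2)" unfolding c_def by (rule R.bessel_summable[OF g])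
  define z where "z = l2_synthesis e b - synthesis Real_field id g c"
  have zg: "hip Real_field id z (g i) = 0" for i
    unfolding z_def c_def by (rule R.projection_residual_orthogonal[OF g])
  define a where "a j = inner z (e j)" for j
  have "a \<in> l2_seqs"
    using R.bessel_summable[OF orthonormal_or_zero_Real_field, of z] by (simp add: a_def hip_def l2_seqs_def)
  moreover have "(\<lambda>j. v k j * a j) sums 0" for k
    using inner_l2_synthesis_sums[OF v, of k z] R.orthogonal_gram_schmidt_imp_orthogonal[of z s k] zg
    by (simp add: a_def s_def g_def hip_def)
  ultimately have a0: "a = (\<lambda>_. 0)" by (rule orth)
  have "inner z (l2_synthesis e b) = 0"
    using inner_l2_synthesis_sums[OF b, of z] by (simp add: a0[unfolded a_def fun_eq_iff] sums_0 sums_unique2)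
  moreover have "hip Real_field id z (synthesis Real_field id g c) = 0"
    using R.hip_synthesis_right_sums[OF g cs c_sq, of z] by (simp add: zg sums_unique2[OF _ sums_zero])
  then have "inner z (synthesis Real_field id g c) = 0" by (simp add: hip_def)
  ultimately have "inner z z = 0" by (simp add: z_def inner_diff_right)
  then have "l2_synthesis e b = synthesis Real_field id g c" by (simp add: z_def)
  then have lim: "(\<lambda>n. \<Sum>i<n. smul Real_field id (c i) (g i)) \<longlonglongrightarrow> l2_synthesis e b"
    using R.synthesis_partial_sums[OF g cs c_sq] by simp
  show "b \<in> l2_closed_span v"
  proof (rule l2_closed_span_memI[OF v b])
    fix eps :: real assume "eps > 0"
    then obtain n where n: "norm ((\<Sum>i<n. smul Real_field id (c i) (g i)) - l2_synthesis e b) < eps"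
      using lim[unfolded LIMSEQ_iff] by blast
    moreover have "(\<Sum>i<n. smul Real_field id (c i) (g i)) \<in> span (s ` {..<n})"
      unfolding g_def by (rule gram_schmidt_partial_sum_in_span)
    ultimately show "\<exists>n. \<exists>w\<in>span ((\<lambda>k. l2_synthesis e (v k)) ` {..<n}). norm (l2_synthesis e b - w) < eps"
      unfolding s_def by (intro exI[of _ n] bexI[of _ "\<Sum>i<n. smul Real_field id (c i) (g i)"])
        (simp_all add: norm_minus_commute)
  qed
qed (simp add: l2_closed_span_def)

end

section \<open>Diagonal operators and quadratic forms on eigenbases\<close>

context hilbert_space
begin

lemma coeff_sq_in_l2_seqs:
  assumes u: "orthonormal_or_zero F J u"
  shows "(\<lambda>j. (cmod (hip F J x (u j)))\<^sup>2) \<in> l2_seqs"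
  unfolding l2_seqs_def mem_Collect_eq
proof (rule summable_comparison_test)
  show "summable (\<lambda>j. (norm x)\<^sup>2 * (cmod (hip F J x (u j)))\<^sup>2)"
    by (intro summable_mult bessel_summable[OF u])
  have "norm (u j) \<le> 1" for j
    using u unfolding orthonormal_or_zero_def by (metis norm_zero order_refl zero_le_one)
  then have "cmod (hip F J x (u j)) \<le> norm x" for j
    using norm_hip_le[of x "u j"] mult_left_le[of "norm (u j)" "norm x"] by fastforce
  then have "(cmod (hip F J x (u j)))\<^sup>2 \<le> (norm x)\<^sup>2" for j by (simp add: power_mono)
  then have "((cmod (hip F J x (u j)))\<^sup>2)\<^sup>2 \<le> (norm x)\<^sup>2 * (cmod (hip F J x (u j)))\<^sup>2" for j
    by (metis mult_right_mono power2_eq_square zero_le_power2)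
  then show "\<exists>N. \<forall>n\<ge>N. norm (((cmod (hip F J x (u n)))\<^sup>2)\<^sup>2) \<le> (norm x)\<^sup>2 * (cmod (hip F J x (u n)))\<^sup>2"
    by simp
qed

text \<open>By Parseval, hip (T x) x is the sum of a j * |hip x (f j)|^2.\<close>
lemma hip_eq_0_iff_eigenbasis:
  assumes f: "orthonormal_basis F J f" and sa: "self_adjoint_op F J T"
    and eig: "\<And>j. T (f j) = a j *\<^sub>R f j"
  shows "hip F J (T x) x = 0 \<longleftrightarrow> (\<lambda>j. (cmod (hip F J x (f j)))\<^sup>2 * a j) sums 0"
proof -
  have "hip F J (T x) (f j) * cnj (hip F J x (f j)) = complex_of_real ((cmod (hip F J x (f j)))\<^sup>2 * a j)"
    for j
  proof -
    have "hip F J (T x) (f j) = of_real (a j) * hip F J x (f j)"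
      using sa by (simp add: self_adjoint_op_def eig hip_scaleR_right)
    then show ?thesis using complex_norm_square[of "hip F J x (f j)"] by (simp add: mult_ac)
  qed
  then have S: "(\<lambda>j. complex_of_real ((cmod (hip F J x (f j)))\<^sup>2 * a j)) sums hip F J (T x) x"
    using parseval_hip_sums[OF f, of "T x" x] by simp
  show ?thesis
  proof
    assume "hip F J (T x) x = 0"
    with S have "(\<lambda>j. complex_of_real ((cmod (hip F J x (f j)))\<^sup>2 * a j)) sums complex_of_real 0"
      by simp
    then show "(\<lambda>j. (cmod (hip F J x (f j)))\<^sup>2 * a j) sums 0" by (simp only: sums_of_real_iff)
  next
    assume "(\<lambda>j. (cmod (hip F J x (f j)))\<^sup>2 * a j) sums 0"
    then have "(\<lambda>j. complex_of_real ((cmod (hip F J x (f j)))\<^sup>2 * a j)) sums complex_of_real 0"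
      by (simp only: sums_of_real_iff)
    then show "hip F J (T x) x = 0" using sums_unique2[OF S] by simp
  qed
qed

definition diag_op :: "(nat \<Rightarrow> 'a) \<Rightarrow> (nat \<Rightarrow> real) \<Rightarrow> 'a \<Rightarrow> 'a" where
  "diag_op e a x = synthesis F J e (\<lambda>j. complex_of_real (a j) * hip F J x (e j))"

context
  fixes e a
  assumes e: "orthonormal_basis F J e" and a: "a \<in> l2_seqs"
begin

lemma diag_op_coeff_summable:
  "summable (\<lambda>j. (cmod (complex_of_real (a j) * hip F J x (e j)))\<^sup>2)"
proof (rule summable_comparison_test)
  show "summable (\<lambda>j. (l2_norm a)\<^sup>2 * (cmod (hip F J x (e j)))\<^sup>2)"
    by (intro summable_mult bessel_summable orthonormal_basis_imp_orthonormal_or_zero[OF e])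
  show "\<exists>N. \<forall>n\<ge>N. norm ((cmod (complex_of_real (a n) * hip F J x (e n)))\<^sup>2)
      \<le> (l2_norm a)\<^sup>2 * (cmod (hip F J x (e n)))\<^sup>2"
    using sq_le_l2_norm_sq[OF a] by (auto simp: norm_mult power_mult_distrib intro!: mult_right_mono)
qed

lemma hip_diag_op: "hip F J (diag_op e a x) (e i) = of_real (a i) * hip F J x (e i)"
  unfolding diag_op_def
  by (subst hip_synthesis_coeff[OF orthonormal_basis_imp_orthonormal_or_zero[OF e] _ diag_op_coeff_summable])
     (auto simp: scal_mult orthonormal_basis_nonzero[OF e])

lemma diag_op_basis: "diag_op e a (e j) = a j *\<^sub>R e j"
  by (rule orthonormal_basis_eqI[OF e]) (simp add: hip_diag_op hip_scaleR_left orthonormal_basis_hip[OF e])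

lemma norm_diag_op_le: "norm (diag_op e a x) \<le> l2_norm a * norm x"
proof (rule power2_le_imp_le)
  have "(\<lambda>j. (cmod (of_real (a j) * hip F J x (e j)))\<^sup>2) sums (norm (diag_op e a x))\<^sup>2"
    using norm_synthesis_sums[OF orthonormal_basis_imp_orthonormal_or_zero[OF e] _ diag_op_coeff_summable]
    by (simp add: diag_op_def scal_mult orthonormal_basis_nonzero[OF e])
  moreover have "(\<lambda>j. (l2_norm a)\<^sup>2 * (cmod (hip F J x (e j)))\<^sup>2) sums ((l2_norm a * norm x)\<^sup>2)"
    using sums_mult[OF parseval_sums[OF e, of x], of "(l2_norm a)\<^sup>2"] by (simp add: power_mult_distrib)
  ultimately show "(norm (diag_op e a x))\<^sup>2 \<le> (l2_norm a * norm x)\<^sup>2"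
    by (rule sums_le[rotated 1])
       (use sq_le_l2_norm_sq[OF a] in \<open>auto simp: norm_mult power_mult_distrib intro!: mult_right_mono\<close>)
qed (simp add: l2_norm_nonneg[OF a])

lemma bounded_op_diag_op: "bounded_op F J (diag_op e a)"
proof -
  have add: "diag_op e a (x + y) = diag_op e a x + diag_op e a y" for x y
    by (rule orthonormal_basis_eqI[OF e]) (simp add: hip_add_left hip_diag_op algebra_simps)
  have smul: "diag_op e a (smul F J c x) = smul F J c (diag_op e a x)" if "c \<in> scal F" for c x
    by (rule orthonormal_basis_eqI[OF e]) (simp add: hip_smul_left[OF that] hip_diag_op algebra_simps)
  have "bounded_linear (diag_op e a)"
  proof (rule bounded_linear_intro[where K="l2_norm a"])
    show "diag_op e a (r *\<^sub>R x) = r *\<^sub>R diag_op e a x" for r x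
      using smul[of "of_real r" x] by simp
  qed (auto simp: add norm_diag_op_le mult.commute)
  with smul show ?thesis by (simp add: bounded_op_def)
qed

lemma self_adjoint_diag_op: "self_adjoint_op F J (diag_op e a)"
  unfolding self_adjoint_op_def
proof (intro allI)
  fix x y
  have "(\<lambda>j. hip F J (diag_op e a x) (e j) * cnj (hip F J y (e j))) =
      (\<lambda>j. hip F J x (e j) * cnj (hip F J (diag_op e a y) (e j)))"
    by (simp add: hip_diag_op mult_ac)
  then show "hip F J (diag_op e a x) y = hip F J x (diag_op e a y)"
    using parseval_hip_sums[OF e, of "diag_op e a x" y] parseval_hip_sums[OF e, of x "diag_op e a y"]
    by (simp add: sums_unique2)
qed

lemma hilbert_schmidt_diag_op: "hilbert_schmidt F J (diag_op e a)"
  unfolding hilbert_schmidt_def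
proof (intro conjI exI[of _ e] bounded_op_diag_op e)
  show "summable (\<lambda>j. (norm (diag_op e a (e j)))\<^sup>2)"
    using a by (simp add: diag_op_basis norm_orthonormal_basis[OF e] l2_seqs_def)
qed

end

end

section \<open>Compactness of Hilbert--Schmidt operators\<close>

fun unit_combinations :: "scalar_field \<Rightarrow> ('a::real_inner \<Rightarrow> 'a) \<Rightarrow> (nat \<Rightarrow> 'a) \<Rightarrow> nat \<Rightarrow> 'a set" where
  "unit_combinations F J w 0 = {0}"
| "unit_combinations F J w (Suc N) =
     {x + smul F J d (w N) | x d. x \<in> unit_combinations F J w N \<and> d \<in> scal F \<and> cmod d \<le> 1}"

context hilbert_space
begin

lemma compact_unit_combinations: "compact (unit_combinations F J w N)"
proof (induction N)
  case (Suc N)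
  have "closed (scal F)" by (cases F) (auto simp: scal_def closed_complex_Reals)
  then have "compact (scal F \<inter> cball 0 1)" by (subst Int_commute, intro compact_Int_closed) auto
  moreover have "continuous_on S (\<lambda>d. smul F J d (w N))" for S
    by (cases F) (auto simp: smul_def intro!: continuous_intros)
  ultimately have "compact ((\<lambda>d. smul F J d (w N)) ` (scal F \<inter> cball 0 1))"
    by (rule compact_continuous_image[rotated])
  from compact_sums[OF Suc this] show ?case
    by (rule back_subst[where P=compact]) (auto simp: dist_norm; fastforce simp: dist_norm)
qed simp

lemma sum_smul_in_unit_combinations:
  "(\<And>j. j < N \<Longrightarrow> d j \<in> scal F \<and> cmod (d j) \<le> 1) \<Longrightarrow>
     (\<Sum>j<N. smul F J (d j) (w j)) \<in> unit_combinations F J w N"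
  by (induction N) force+

lemma norm_sum_smul_sq_le:
  assumes "\<And>j. j \<in> A \<Longrightarrow> c j \<in> scal F"
  shows "(norm (\<Sum>j\<in>A. smul F J (c j) (w j)))\<^sup>2 \<le> (\<Sum>j\<in>A. (cmod (c j))\<^sup>2) * (\<Sum>j\<in>A. (norm (w j))\<^sup>2)"
proof -
  have "norm (\<Sum>j\<in>A. smul F J (c j) (w j)) \<le> (\<Sum>j\<in>A. cmod (c j) * norm (w j))"
    by (rule order_trans[OF norm_sum]) (simp add: norm_smul assms)
  then have "(norm (\<Sum>j\<in>A. smul F J (c j) (w j)))\<^sup>2 \<le> (\<Sum>j\<in>A. cmod (c j) * norm (w j))\<^sup>2"
    by (simp add: power_mono)
  also have "\<dots> \<le> (\<Sum>j\<in>A. (cmod (c j))\<^sup>2) * (\<Sum>j\<in>A. (norm (w j))\<^sup>2)"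
    by (rule Cauchy_Schwarz_ineq_sum)
  finally show ?thesis .
qed

lemma bounded_op_expansion_sums:
  assumes T: "bounded_op F J T" and e: "orthonormal_basis F J e"
  shows "(\<lambda>j. smul F J (hip F J y (e j)) (T (e j))) sums T y"
proof -
  have lin: "linear T" using T by (simp add: bounded_op_def bounded_linear.linear)
  have "(\<lambda>n. T (\<Sum>j<n. smul F J (hip F J y (e j)) (e j))) \<longlonglongrightarrow> T y"
    using T orthonormal_basis_expansion_sums[OF e, of y]
    by (auto simp: bounded_op_def sums_def intro: bounded_linear.tendsto)
  then show ?thesis
    using T by (simp add: sums_def linear_sum[OF lin] bounded_op_def)
qed

lemma norm_bounded_op_diff_partial_sum_le:
  assumes T: "bounded_op F J T" and e: "orthonormal_basis F J e" and y: "norm y \<le> 1"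
    and tail: "\<And>M. (\<Sum>j\<in>{N..<M}. (norm (T (e j)))\<^sup>2) \<le> \<delta>\<^sup>2" and \<delta>: "0 \<le> \<delta>"
  shows "norm (T y - (\<Sum>j<N. smul F J (hip F J y (e j)) (T (e j)))) \<le> \<delta>"
proof -
  define c where "c j = hip F J y (e j)" for j
  have cs: "c j \<in> scal F" for j by (simp add: c_def)
  have c1: "(\<Sum>j\<in>{N..<M}. (cmod (c j))\<^sup>2) \<le> 1" for M
  proof -
    have "(\<Sum>j\<in>{N..<M}. (cmod (c j))\<^sup>2) \<le> (\<Sum>j<M. (cmod (c j))\<^sup>2)" by (rule sum_mono2) auto
    also have "\<dots> \<le> (norm y)\<^sup>2"
      unfolding c_def by (rule bessel_inequality_finite[OF orthonormal_basis_imp_orthonormal_or_zero[OF e]])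
    also have "\<dots> \<le> 1" using y by (simp add: power_le_one)
    finally show ?thesis .
  qed
  let ?s = "\<lambda>M. \<Sum>j<M. smul F J (c j) (T (e j))"
  have "norm (?s M - ?s N) \<le> \<delta>" if "M \<ge> N" for M
  proof (rule power2_le_imp_le)
    have "?s M = ?s N + (\<Sum>j\<in>{N..<M}. smul F J (c j) (T (e j)))"
      using sum.atLeastLessThan_concat[OF le0 that, of "\<lambda>j. smul F J (c j) (T (e j))"]
      by (simp add: atLeast0LessThan)
    then have "?s M - ?s N = (\<Sum>j\<in>{N..<M}. smul F J (c j) (T (e j)))" by simp
    then have "(norm (?s M - ?s N))\<^sup>2 \<le>
        (\<Sum>j\<in>{N..<M}. (cmod (c j))\<^sup>2) * (\<Sum>j\<in>{N..<M}. (norm (T (e j)))\<^sup>2)"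
      using norm_sum_smul_sq_le[of "{N..<M}" c "\<lambda>j. T (e j)"] cs by simp
    also have "\<dots> \<le> 1 * \<delta>\<^sup>2" by (intro mult_mono c1 tail) (auto intro: sum_nonneg)
    finally show "(norm (?s M - ?s N))\<^sup>2 \<le> \<delta>\<^sup>2" by simp
  qed (rule \<delta>)
  then show ?thesis
    using bounded_op_expansion_sums[OF T e, of y]
    by (intro LIMSEQ_le_const2[OF tendsto_norm[OF tendsto_diff[OF _ tendsto_const]]])
       (auto simp: sums_def c_def)
qed

text \<open>The image of the unit ball is within eps of the compact set of unit combinations of the
  first N vectors T (e j), where N is chosen so that the Hilbert--Schmidt tail is small.\<close>
lemma hilbert_schmidt_image_totally_bounded:
  assumes T: "bounded_op F J T" and e: "orthonormal_basis F J e"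
    and hs: "summable (\<lambda>j. (norm (T (e j)))\<^sup>2)" and eps: "eps > 0"
  shows "\<exists>k. finite k \<and> T ` cball 0 1 \<subseteq> (\<Union>c\<in>k. ball c eps)"
proof -
  obtain N where N: "norm (\<Sum>i. (norm (T (e (i + N))))\<^sup>2) < (eps / 2)\<^sup>2"
    using suminf_exist_split[OF _ hs, of "(eps / 2)\<^sup>2"] eps by auto
  have tail: "(\<Sum>j\<in>{N..<M}. (norm (T (e j)))\<^sup>2) \<le> (eps / 2)\<^sup>2" for M
  proof -
    have "(\<Sum>j\<in>{N..<M}. (norm (T (e j)))\<^sup>2) = (\<Sum>i<M - N. (norm (T (e (i + N))))\<^sup>2)"
      by (rule sum.reindex_bij_witness[of _ "\<lambda>i. i + N" "\<lambda>j. j - N"]) auto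
    also have "\<dots> \<le> (\<Sum>i. (norm (T (e (i + N))))\<^sup>2)"
      using hs by (intro sum_le_suminf) (auto simp: summable_iff_shift[of "\<lambda>j. (norm (T (e j)))\<^sup>2" N])
    finally show ?thesis using N by simp
  qed
  obtain k where k: "finite k" "unit_combinations F J (\<lambda>j. T (e j)) N \<subseteq> (\<Union>c\<in>k. ball c (eps / 2))"
    using compact_unit_combinations[of "\<lambda>j. T (e j)" N] eps
    unfolding compact_eq_totally_bounded by (meson half_gt_zero)
  have "T y \<in> (\<Union>c\<in>k. ball c eps)" if y: "norm y \<le> 1" for y
  proof -
    define z where "z = (\<Sum>j<N. smul F J (hip F J y (e j)) (T (e j)))"
    have "cmod (hip F J y (e j)) \<le> 1" for j
      using norm_hip_le[of y "e j"] y norm_orthonormal_basis[OF e, of j]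
      by (metis mult.right_neutral order_trans)
    then have "z \<in> unit_combinations F J (\<lambda>j. T (e j)) N"
      unfolding z_def by (intro sum_smul_in_unit_combinations conjI hip_in_scal)
    then obtain q where q: "q \<in> k" "dist q z < eps / 2" using k(2) by auto
    have "norm (T y - z) \<le> eps / 2"
      unfolding z_def using eps by (intro norm_bounded_op_diff_partial_sum_le[OF T e y tail]) simp
    then have "dist q (T y) < eps"
      using q(2) dist_triangle[of q "T y" z] by (simp add: dist_norm norm_minus_commute)
    with q(1) show ?thesis by auto
  qed
  then have "T ` cball 0 1 \<subseteq> (\<Union>c\<in>k. ball c eps)" by (auto simp: mem_cball_0)
  with k(1) show ?thesis by blast
qed

lemma hilbert_schmidt_convergent_subseq:
  fixes x :: "nat \<Rightarrow> 'a"
  assumes T: "bounded_op F J T" and e: "orthonormal_basis F J e"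
    and hs: "summable (\<lambda>j. (norm (T (e j)))\<^sup>2)" and x: "\<And>n. norm (x n) \<le> 1"
  shows "\<exists>l r. strict_mono r \<and> (\<lambda>n. T (x (r n))) \<longlonglongrightarrow> l"
proof -
  let ?S = "T ` cball 0 1"
  have "compact (closure ?S)"
    unfolding compact_eq_totally_bounded
  proof (intro conjI allI impI)
    show "complete (closure ?S)" by (simp add: complete_eq_closed)
    fix eps :: real assume eps: "eps > 0"
    obtain k where k: "finite k" "?S \<subseteq> (\<Union>c\<in>k. ball c (eps / 2))"
      using hilbert_schmidt_image_totally_bounded[OF T e hs, of "eps / 2"] eps by auto
    have "(\<Union>c\<in>k. ball c (eps / 2)) \<subseteq> (\<Union>c\<in>k. cball c (eps / 2))"
      by (intro UN_mono) (auto simp: ball_subset_cball)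
    with k have "closure ?S \<subseteq> (\<Union>c\<in>k. cball c (eps / 2))"
      by (intro closure_minimal closed_UN) auto
    also have "\<dots> \<subseteq> (\<Union>c\<in>k. ball c eps)" using eps by auto
    finally show "\<exists>k. finite k \<and> closure ?S \<subseteq> (\<Union>c\<in>k. ball c eps)" using k(1) by blast
  qed
  then have "seq_compact (closure ?S)" by (rule compact_imp_seq_compact)
  moreover have "\<forall>n. T (x n) \<in> closure ?S" using x closure_subset by fastforce
  ultimately obtain l r where "l \<in> closure ?S" "strict_mono r" "((\<lambda>n. T (x n)) \<circ> r) \<longlonglongrightarrow> l"
    by (rule seq_compactE[of "closure ?S" "\<lambda>n. T (x n)"])
  then show ?thesis by (auto simp: o_def)
qed

end

section \<open>Norm-attaining eigenvectors of compact self-adjoint operators\<close>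

lemma eigenvector_of_square_eigenvector:
  fixes T :: "'a::real_normed_vector \<Rightarrow> 'a"
  assumes lin: "linear T" and W: "subspace W" and TW: "\<And>x. x \<in> W \<Longrightarrow> T x \<in> W"
    and y: "y \<in> W" "norm y = 1" and TTy: "T (T y) = m\<^sup>2 *\<^sub>R y"
  shows "\<exists>y'\<in>W. norm y' = 1 \<and> (T y' = m *\<^sub>R y' \<or> T y' = (- m) *\<^sub>R y')"
proof (cases "T y + m *\<^sub>R y = 0")
  case True
  then have "T y = (- m) *\<^sub>R y" by (simp add: eq_neg_iff_add_eq_0)
  with y show ?thesis by blast
next
  case False
  define w where "w = T y + m *\<^sub>R y"
  have "T w = m *\<^sub>R w"
    by (simp add: w_def linear_add[OF lin] linear_scale[OF lin] TTy power2_eq_square algebra_simps)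
  moreover have "w \<in> W" unfolding w_def by (intro subspace_add[OF W] subspace_scale[OF W] TW y)
  ultimately show ?thesis
    using False by (intro bexI[of _ "sgn w"])
      (auto simp: w_def[symmetric] sgn_div_norm norm_sgn linear_scale[OF lin] subspace_scale[OF W])
qed

lemma norm_square_eigen_defect_le:
  fixes T :: "'a::real_inner \<Rightarrow> 'a"
  assumes sa: "\<And>x y. inner (T x) y = inner x (T y)"
    and TTx: "norm (T (T x)) \<le> m * norm (T x)" and x: "norm x = 1"
  shows "(norm (T (T x) - m\<^sup>2 *\<^sub>R x))\<^sup>2 \<le> m\<^sup>2 * (m\<^sup>2 - (norm (T x))\<^sup>2)"
proof -
  have expand: "(norm (c - k *\<^sub>R a))\<^sup>2 = (norm c)\<^sup>2 - 2 * k * inner c a + k\<^sup>2 * (norm a)\<^sup>2"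
    for c a :: 'a and k
    unfolding power2_norm_eq_inner by (simp add: inner_diff_left inner_diff_right inner_commute[of a c]
        power2_eq_square algebra_simps)
  have "inner (T (T x)) x = (norm (T x))\<^sup>2" by (simp add: sa power2_norm_eq_inner)
  then have "(norm (T (T x) - m\<^sup>2 *\<^sub>R x))\<^sup>2 = (norm (T (T x)))\<^sup>2 - 2 * m\<^sup>2 * (norm (T x))\<^sup>2 + (m\<^sup>2)\<^sup>2"
    using x by (simp add: expand)
  moreover have "(norm (T (T x)))\<^sup>2 \<le> m\<^sup>2 * (norm (T x))\<^sup>2"
    using TTx by (metis norm_ge_zero power_mono power_mult_distrib)
  ultimately show ?thesis by (simp add: power2_eq_square algebra_simps)
qed

text \<open>The classical variational argument: a maximizing sequence for ||T x|| on the unit sphere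
  of W is, by the previous lemma, asymptotically an eigenvector of T^2.\<close>
lemma approximate_eigenvector_seq:
  fixes T :: "'a::real_inner \<Rightarrow> 'a"
  assumes sa: "\<And>x y. inner (T x) y = inner x (T y)"
    and TW: "\<And>x. x \<in> W \<Longrightarrow> T x \<in> W" and bnd: "\<And>x. x \<in> W \<Longrightarrow> norm (T x) \<le> m * norm x"
    and approx: "\<And>eps. eps > 0 \<Longrightarrow> \<exists>x\<in>W. norm x = 1 \<and> norm (T x) > m - eps"
  obtains x where "\<And>n. x n \<in> W" "\<And>n. norm (x n) = 1" "(\<lambda>n. T (T (x n)) - m\<^sup>2 *\<^sub>R x n) \<longlonglongrightarrow> 0"
proof -
  have "\<forall>n. \<exists>x. x \<in> W \<and> norm x = 1 \<and> norm (T x) > m - 1 / real (Suc n)"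
    using approx by (metis of_nat_0_less_iff zero_less_Suc zero_less_divide_1_iff)
  then obtain x where x: "\<And>n. x n \<in> W" "\<And>n. norm (x n) = 1" "\<And>n. norm (T (x n)) > m - 1 / real (Suc n)"
    by metis
  have tn: "(\<lambda>n. norm (T (x n))) \<longlonglongrightarrow> m"
  proof (rule tendsto_sandwich)
    show "(\<lambda>n. m - 1 / real (Suc n)) \<longlonglongrightarrow> m"
      using tendsto_diff[OF tendsto_const[of m] LIMSEQ_inverse_real_of_nat] by (simp add: inverse_eq_divide)
    show "\<forall>\<^sub>F n in sequentially. m - 1 / real (Suc n) \<le> norm (T (x n))"
      using x(3) by (intro always_eventually allI less_imp_le)
    show "\<forall>\<^sub>F n in sequentially. norm (T (x n)) \<le> m"
      using bnd[OF x(1)] x(2) by (intro always_eventually allI) simp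
  qed simp
  have "(\<lambda>n. m\<^sup>2 * (m\<^sup>2 - (norm (T (x n)))\<^sup>2)) \<longlonglongrightarrow> m\<^sup>2 * (m\<^sup>2 - m\<^sup>2)"
    by (intro tendsto_intros tn)
  then have lim0: "(\<lambda>n. m\<^sup>2 * (m\<^sup>2 - (norm (T (x n)))\<^sup>2)) \<longlonglongrightarrow> 0" by simp
  have "(norm (T (T (x n)) - m\<^sup>2 *\<^sub>R x n))\<^sup>2 \<le> m\<^sup>2 * (m\<^sup>2 - (norm (T (x n)))\<^sup>2)" for n
    by (rule norm_square_eigen_defect_le[of T, OF sa bnd[OF TW[OF x(1)]] x(2)])
  then have ev: "\<forall>\<^sub>F n in sequentially.
      (norm (T (T (x n)) - m\<^sup>2 *\<^sub>R x n))\<^sup>2 \<le> m\<^sup>2 * (m\<^sup>2 - (norm (T (x n)))\<^sup>2)"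
    by (rule always_eventually[OF allI])
  have "(\<lambda>n. (norm (T (T (x n)) - m\<^sup>2 *\<^sub>R x n))\<^sup>2) \<longlonglongrightarrow> 0"
    by (rule tendsto_sandwich[OF always_eventually[OF allI[OF zero_le_power2]] ev tendsto_const lim0])
  then have "(\<lambda>n. sqrt ((norm (T (T (x n)) - m\<^sup>2 *\<^sub>R x n))\<^sup>2)) \<longlonglongrightarrow> sqrt 0"
    by (intro tendsto_intros)
  then have "(\<lambda>n. norm (T (T (x n)) - m\<^sup>2 *\<^sub>R x n)) \<longlonglongrightarrow> 0" by simp
  then have "(\<lambda>n. T (T (x n)) - m\<^sup>2 *\<^sub>R x n) \<longlonglongrightarrow> 0" by (rule tendsto_norm_zero_iff[THEN iffD1])
  with x(1,2) show ?thesis by (rule that)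
qed

lemma self_adjoint_compact_norm_eigenvector:
  fixes T :: "'a::{real_inner, complete_space} \<Rightarrow> 'a" and W :: "'a set"
  assumes bl: "bounded_linear T"
    and sa: "\<And>x y. inner (T x) y = inner x (T y)"
    and cpt: "\<And>x :: nat \<Rightarrow> 'a. (\<And>n. norm (x n) \<le> 1) \<Longrightarrow> \<exists>l r. strict_mono r \<and> (\<lambda>n. T (x (r n))) \<longlonglongrightarrow> l"
    and W: "closed W" "subspace W" and TW: "\<And>x. x \<in> W \<Longrightarrow> T x \<in> W"
    and m: "m > 0" and bnd: "\<And>x. x \<in> W \<Longrightarrow> norm (T x) \<le> m * norm x"
    and approx: "\<And>eps. eps > 0 \<Longrightarrow> \<exists>x\<in>W. norm x = 1 \<and> norm (T x) > m - eps"
  shows "\<exists>y\<in>W. norm y = 1 \<and> (T y = m *\<^sub>R y \<or> T y = (- m) *\<^sub>R y)"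
proof -
  obtain x where x: "\<And>n. x n \<in> W" "\<And>n. norm (x n) = 1"
    and defect: "(\<lambda>n. T (T (x n)) - m\<^sup>2 *\<^sub>R x n) \<longlonglongrightarrow> 0"
    using approximate_eigenvector_seq[of T W m, OF sa TW bnd approx] by blast
  obtain z r where r: "strict_mono r" and z: "(\<lambda>n. T (x (r n))) \<longlonglongrightarrow> z"
    using cpt[of x] x(2) by auto
  have "(\<lambda>n. T (T (x (r n))) - m\<^sup>2 *\<^sub>R x (r n)) \<longlonglongrightarrow> 0"
    using LIMSEQ_subseq_LIMSEQ[OF defect r] by (simp add: o_def)
  then have "(\<lambda>n. T (T (x (r n))) - (T (T (x (r n))) - m\<^sup>2 *\<^sub>R x (r n))) \<longlonglongrightarrow> T z - 0"
    by (intro tendsto_diff bounded_linear.tendsto[OF bl z])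
  then have "(\<lambda>n. m\<^sup>2 *\<^sub>R x (r n)) \<longlonglongrightarrow> T z" by simp
  then have "(\<lambda>n. inverse (m\<^sup>2) *\<^sub>R (m\<^sup>2 *\<^sub>R x (r n))) \<longlonglongrightarrow> inverse (m\<^sup>2) *\<^sub>R T z"
    by (intro tendsto_intros)
  then have xr: "(\<lambda>n. x (r n)) \<longlonglongrightarrow> inverse (m\<^sup>2) *\<^sub>R T z" using m by simp
  define y where "y = inverse (m\<^sup>2) *\<^sub>R T z"
  have "y \<in> W" using closed_sequentially[OF W(1) _ xr] x(1) by (simp add: y_def)
  moreover have "norm y = 1"
    using tendsto_norm[OF xr] x(2) by (simp add: y_def LIMSEQ_const_iff)
  moreover have "T (T y) = m\<^sup>2 *\<^sub>R y"
  proof -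
    have "(\<lambda>n. T (x (r n))) \<longlonglongrightarrow> T y" using bounded_linear.tendsto[OF bl xr] by (simp add: y_def)
    then have "z = T y" using z LIMSEQ_unique by blast
    then show ?thesis using m by (simp add: y_def)
  qed
  ultimately show ?thesis
    by (intro eigenvector_of_square_eigenvector[OF bounded_linear.linear[OF bl] W(2) TW])
qed

definition opnorm_on :: "('a::real_normed_vector \<Rightarrow> 'b::real_normed_vector) \<Rightarrow> 'a set \<Rightarrow> real" where
  "opnorm_on T W = Sup ((\<lambda>x. norm (T x)) ` {x \<in> W. norm x \<le> 1})"

context
  fixes T :: "'a::real_normed_vector \<Rightarrow> 'b::real_normed_vector" and W :: "'a set"
  assumes T: "bounded_linear T" and W: "subspace W"
begin

lemma opnorm_on_upper: "x \<in> W \<Longrightarrow> norm x \<le> 1 \<Longrightarrow> norm (T x) \<le> opnorm_on T W"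
  unfolding opnorm_on_def
proof (rule cSup_upper)
  obtain K where K: "\<And>x. norm (T x) \<le> norm x * K" "K > 0"
    using bounded_linear.pos_bounded[OF T] by blast
  have "norm (T x) \<le> K" if "norm x \<le> 1" for x
    using K(1)[of x] mult_left_le_one_le[OF less_imp_le[OF K(2)] norm_ge_zero that] by simp
  then show "bdd_above ((\<lambda>x. norm (T x)) ` {x \<in> W. norm x \<le> 1})"
    by (intro bdd_aboveI[where M=K]) auto
qed auto

lemma opnorm_on_nonneg: "0 \<le> opnorm_on T W"
  using opnorm_on_upper[of 0] W by (simp add: subspace_0 linear_0[OF bounded_linear.linear[OF T]])

lemma norm_le_opnorm_on: assumes "x \<in> W" shows "norm (T x) \<le> opnorm_on T W * norm x"
proof (cases "x = 0")
  case False
  have "norm (T (inverse (norm x) *\<^sub>R x)) \<le> opnorm_on T W"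
    using False assms by (intro opnorm_on_upper subspace_scale[OF W]) auto
  then show ?thesis
    using False by (simp add: linear_scale[OF bounded_linear.linear[OF T]] field_simps)
qed (simp add: linear_0[OF bounded_linear.linear[OF T]])

lemma opnorm_on_approx:
  assumes "opnorm_on T W > 0" "eps > 0"
  shows "\<exists>x\<in>W. norm x = 1 \<and> norm (T x) > opnorm_on T W - eps"
proof -
  define d where "d = min eps (opnorm_on T W)"
  have d: "d > 0" "d \<le> eps" using assms by (auto simp: d_def)
  have "{x \<in> W. norm x \<le> 1} \<noteq> {}" using W by (auto intro!: exI[of _ 0] simp: subspace_0)
  then obtain x where x: "x \<in> W" "norm x \<le> 1" "norm (T x) > opnorm_on T W - d"
    using less_cSupE[of "opnorm_on T W - d" "(\<lambda>x. norm (T x)) ` {x \<in> W. norm x \<le> 1}"] d(1)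
    by (auto simp: opnorm_on_def)
  then have "x \<noteq> 0" using d assms by (auto simp: d_def linear_0[OF bounded_linear.linear[OF T]])
  have "norm (T x) \<le> norm (T (inverse (norm x) *\<^sub>R x))"
    using x(2) \<open>x \<noteq> 0\<close> by (simp add: linear_scale[OF bounded_linear.linear[OF T]] field_simps mult_left_le_one_le)
  with x \<open>x \<noteq> 0\<close> d show ?thesis
    by (intro bexI[of _ "inverse (norm x) *\<^sub>R x"]) (auto intro: subspace_scale[OF W])
qed

end

definition next_eigenvector :: "('a::real_normed_vector \<Rightarrow> 'a) \<Rightarrow> 'a set \<Rightarrow> 'a" where
  "next_eigenvector T W = (if opnorm_on T W = 0 then 0 else
     SOME y. y \<in> W \<and> norm y = 1 \<and> (T y = opnorm_on T W *\<^sub>R y \<or> T y = (- opnorm_on T W) *\<^sub>R y))"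

function eigen_seq :: "scalar_field \<Rightarrow> ('a::real_inner \<Rightarrow> 'a) \<Rightarrow> ('a \<Rightarrow> 'a) \<Rightarrow> nat \<Rightarrow> 'a" where
  "eigen_seq F J T n = next_eigenvector T {x. \<forall>i<n. hip F J x (eigen_seq F J T i) = 0}"
  by auto
termination by (relation "Wellfounded.measure (\<lambda>(F, J, T, n). n)") auto

declare eigen_seq.simps [simp del]

definition orthogonal_to_first :: "scalar_field \<Rightarrow> ('a::real_inner \<Rightarrow> 'a) \<Rightarrow> (nat \<Rightarrow> 'a) \<Rightarrow> nat \<Rightarrow> 'a set" where
  "orthogonal_to_first F J u n = {x. \<forall>i<n. hip F J x (u i) = 0}"

lemma eigen_seq_eq: "eigen_seq F J T n = next_eigenvector T (orthogonal_to_first F J (eigen_seq F J T) n)"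
  by (simp add: eigen_seq.simps[of F J T n] orthogonal_to_first_def)

context hilbert_space
begin

lemma subspace_orthogonal_to_first: "subspace (orthogonal_to_first F J u n)"
  by (auto simp: subspace_def orthogonal_to_first_def hip_add_left hip_scaleR_left)

lemma closed_orthogonal_to_first: "closed (orthogonal_to_first F J u n)"
proof -
  have "orthogonal_to_first F J u n = (\<Inter>i<n. {x. hip F J x (u i) = 0})"
    by (auto simp: orthogonal_to_first_def)
  then show ?thesis
    by (auto intro!: closed_Collect_eq continuous_on_hip_left continuous_on_const)
qed

lemma hilbert_schmidt_summable_orthonormal_or_zero:
  assumes sa: "self_adjoint_op F J T" and e: "orthonormal_basis F J e"
    and hs: "summable (\<lambda>j. (norm (T (e j)))\<^sup>2)" and u: "orthonormal_or_zero F J u"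
  shows "summable (\<lambda>n. (norm (T (u n)))\<^sup>2)"
proof (rule summableI_nonneg_bounded[where x="\<Sum>j. (norm (T (e j)))\<^sup>2"])
  fix N
  have "(cmod (hip F J (T (u n)) (e j)))\<^sup>2 = (cmod (hip F J (T (e j)) (u n)))\<^sup>2" for n j
    using sa unfolding self_adjoint_op_def by (metis complex_mod_cnj hip_commute)
  then have sn: "(\<lambda>j. (cmod (hip F J (T (e j)) (u n)))\<^sup>2) sums (norm (T (u n)))\<^sup>2" for n
    using parseval_sums[OF e, of "T (u n)"] by simp
  have "(\<Sum>n<N. (norm (T (u n)))\<^sup>2) = (\<Sum>n<N. \<Sum>j. (cmod (hip F J (T (e j)) (u n)))\<^sup>2)"
    using sn by (simp add: sums_iff)
  also have "\<dots> = (\<Sum>j. \<Sum>n<N. (cmod (hip F J (T (e j)) (u n)))\<^sup>2)"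
    by (rule suminf_sum[symmetric]) (use sn in \<open>auto simp: sums_iff\<close>)
  also have "\<dots> \<le> (\<Sum>j. (norm (T (e j)))\<^sup>2)"
    using sn hs bessel_inequality_finite[OF u]
    by (intro suminf_le summable_sum) (auto simp: sums_iff)
  finally show "(\<Sum>n<N. (norm (T (u n)))\<^sup>2) \<le> (\<Sum>j. (norm (T (e j)))\<^sup>2)" .
qed simp

context
  fixes T e
  assumes T: "bounded_op F J T" and sa: "self_adjoint_op F J T"
    and e: "orthonormal_basis F J e" and hs: "summable (\<lambda>j. (norm (T (e j)))\<^sup>2)"
begin

lemma eigen_seq_characterization:
  fixes n :: nat
  defines "W \<equiv> orthogonal_to_first F J (eigen_seq F J T) n"
  shows "eigen_seq F J T n \<in> W \<and> (eigen_seq F J T n = 0 \<or> norm (eigen_seq F J T n) = 1) \<and>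
    norm (T (eigen_seq F J T n)) = opnorm_on T W \<and>
    (T (eigen_seq F J T n) = opnorm_on T W *\<^sub>R eigen_seq F J T n \<or>
     T (eigen_seq F J T n) = (- opnorm_on T W) *\<^sub>R eigen_seq F J T n)"
  unfolding W_def
proof (induction n rule: less_induct)
  case (less n)
  let ?u = "eigen_seq F J T" and ?W = "orthogonal_to_first F J (eigen_seq F J T) n"
  let ?m = "opnorm_on T ?W"
  have bl: "bounded_linear T" by (rule bounded_op_imp_bounded_linear[OF T])
  have W: "subspace ?W" "closed ?W" by (rule subspace_orthogonal_to_first closed_orthogonal_to_first)+
  have TW: "T x \<in> ?W" if x: "x \<in> ?W" for x
  proof -
    have "hip F J (T x) (?u i) = 0" if "i < n" for i
    proof -
      obtain c where "T (?u i) = c *\<^sub>R ?u i" using less[OF \<open>i < n\<close>] by blast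
      then show ?thesis
        using sa x \<open>i < n\<close> by (simp add: self_adjoint_op_def hip_scaleR_right orthogonal_to_first_def)
    qed
    then show ?thesis by (simp add: orthogonal_to_first_def)
  qed
  show ?case
  proof (cases "?m = 0")
    case True
    then show ?thesis
      using W by (simp add: eigen_seq_eq[of F J T n] next_eigenvector_def subspace_0
          linear_0[OF bounded_linear.linear[OF bl]])
  next
    case False
    then have m: "?m > 0" using opnorm_on_nonneg[OF bl W(1)] by simp
    have saR: "inner (T x) y = inner x (T y)" for x y
      using sa by (metis self_adjoint_op_def Re_hip)
    have ex: "\<exists>y\<in>?W. norm y = 1 \<and> (T y = ?m *\<^sub>R y \<or> T y = (- ?m) *\<^sub>R y)"
      by (rule self_adjoint_compact_norm_eigenvector[of T, OF bl saR
          hilbert_schmidt_convergent_subseq[OF T e hs] W(2,1) TW m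
          norm_le_opnorm_on[OF bl W(1)] opnorm_on_approx[OF bl W(1) m]])
    have u: "?u n = (SOME y. y \<in> ?W \<and> norm y = 1 \<and> (T y = ?m *\<^sub>R y \<or> T y = (- ?m) *\<^sub>R y))"
      using False by (simp only: eigen_seq_eq[of F J T n] next_eigenvector_def if_False)
    have "?u n \<in> ?W \<and> norm (?u n) = 1 \<and> (T (?u n) = ?m *\<^sub>R ?u n \<or> T (?u n) = (- ?m) *\<^sub>R ?u n)"
      unfolding u by (rule someI_ex) (use ex in blast)
    then show ?thesis using m by auto
  qed
qed

lemma eigen_seq_eigenvector: "\<exists>c. T (eigen_seq F J T n) = c *\<^sub>R eigen_seq F J T n"
  using eigen_seq_characterization by blast

lemma orthonormal_or_zero_eigen_seq: "orthonormal_or_zero F J (eigen_seq F J T)"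
  unfolding orthonormal_or_zero_def
proof (intro conjI allI impI)
  have later: "hip F J (eigen_seq F J T j) (eigen_seq F J T i) = 0" if "i < j" for i j
    using eigen_seq_characterization[of j] that by (simp add: orthogonal_to_first_def)
  fix i j :: nat assume "i \<noteq> j"
  then show "hip F J (eigen_seq F J T i) (eigen_seq F J T j) = 0"
    using later[of i j] later[of j i] hip_commute[of "eigen_seq F J T j" "eigen_seq F J T i"]
    by (cases "i < j") auto
qed (use eigen_seq_characterization in blast)

text \<open>The operator norms on the successive orthogonal complements are the moduli of the
  eigenvalues, which are square summable, hence tend to 0.\<close>
lemma eigen_seq_kernel:
  assumes x: "\<And>n. hip F J x (eigen_seq F J T n) = 0"
  shows "T x = 0"
proof -
  define m where "m n = opnorm_on T (orthogonal_to_first F J (eigen_seq F J T) n)" for n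
  have "norm (T (eigen_seq F J T n)) = m n" for n using eigen_seq_characterization by (simp add: m_def)
  moreover have "summable (\<lambda>n. (norm (T (eigen_seq F J T n)))\<^sup>2)"
    by (rule hilbert_schmidt_summable_orthonormal_or_zero[OF sa e hs orthonormal_or_zero_eigen_seq])
  ultimately have "summable (\<lambda>n. (m n)\<^sup>2)" by simp
  then have "(\<lambda>n. (m n)\<^sup>2) \<longlonglongrightarrow> 0" by (rule summable_LIMSEQ_zero)
  then have "m \<longlonglongrightarrow> 0" by simp
  then have "(\<lambda>n. m n * norm x) \<longlonglongrightarrow> 0 * norm x" by (intro tendsto_intros)
  moreover have "norm (T x) \<le> m n * norm x" for n
    unfolding m_def using x
    by (intro norm_le_opnorm_on[OF bounded_op_imp_bounded_linear[OF T] subspace_orthogonal_to_first])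
       (simp add: orthogonal_to_first_def)
  ultimately have "norm (T x) \<le> 0" by (intro LIMSEQ_le_const) auto
  then show ?thesis by simp
qed

end

end

section \<open>Orthonormal eigenbases of Hilbert--Schmidt operators\<close>

context hilbert_space
begin

lemma orthonormal_or_zero_interleave:
  assumes u: "orthonormal_or_zero F J u" and g: "orthonormal_or_zero F J g"
    and gu: "\<And>i j. hip F J (g i) (u j) = 0"
  shows "orthonormal_or_zero F J (\<lambda>m. if even m then u (m div 2) else g (m div 2))"
  unfolding orthonormal_or_zero_def
proof (intro conjI allI impI)
  fix i j :: nat assume "i \<noteq> j"
  have half: "even i = even j \<Longrightarrow> i div 2 \<noteq> j div 2"
    using \<open>i \<noteq> j\<close> by (metis div_mult_mod_eq mod2_eq_if)
  show "hip F J (if even i then u (i div 2) else g (i div 2)) (if even j then u (j div 2) else g (j div 2)) = 0"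
    using u g half gu[of "j div 2" "i div 2"] gu[of "i div 2" "j div 2"]
      hip_commute[of "u (i div 2)" "g (j div 2)"]
    by (auto simp: orthonormal_or_zero_def)
qed (use u g in \<open>auto simp: orthonormal_or_zero_def\<close>)

lemma hip_orthogonal_dense_eq_0:
  assumes "closure D = UNIV" and "\<And>y. y \<in> D \<Longrightarrow> hip F J x y = 0"
  shows "x = 0"
proof -
  obtain q where q: "\<And>k. q k \<in> D" "q \<longlonglongrightarrow> x"
    using closure_sequential[of x D] assms(1) by auto
  have lim: "(\<lambda>k. hip F J x (q k)) \<longlonglongrightarrow> hip F J x x" by (intro tendsto_hip tendsto_const q(2))
  have "hip F J x (q k) = 0" for k using assms(2) q(1) .
  then show ?thesis using lim by (simp add: LIMSEQ_const_iff hip_self)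
qed

text \<open>Kernel completion: project a dense sequence onto the orthogonal complement of the
  eigenvectors u; since that complement lies in the kernel, Gram--Schmidt there yields
  eigenvectors for the eigenvalue 0, interleaved with the u.\<close>
lemma eigenfamily_completion:
  assumes T: "bounded_op F J T" and u: "orthonormal_or_zero F J u"
    and eig: "\<And>n. \<exists>c. T (u n) = c *\<^sub>R u n"
    and ker: "\<And>x. (\<And>n. hip F J x (u n) = 0) \<Longrightarrow> T x = 0"
    and sep: "\<exists>D::'a set. countable D \<and> closure D = UNIV"
  shows "\<exists>f. orthonormal_or_zero F J f \<and> (\<forall>m. \<exists>c. T (f m) = c *\<^sub>R f m) \<and>
    (\<forall>x. (\<forall>m. hip F J x (f m) = 0) \<longrightarrow> x = 0)"
proof -
  have lin: "linear T" and Ts: "\<And>c y. c \<in> scal F \<Longrightarrow> T (smul F J c y) = smul F J c (T y)"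
    using T by (auto simp: bounded_op_def bounded_linear.linear)
  obtain D :: "'a set" where D: "countable D" "closure D = UNIV" using sep by blast
  define d where "d = from_nat_into D"
  have range_d: "range d = D" unfolding d_def using D by (intro range_from_nat_into) auto
  define P where "P y = synthesis F J u (\<lambda>k. hip F J y (u k))" for y
  define K where "K = {x. T x = 0 \<and> (\<forall>k. hip F J x (u k) = 0)}"
  have K: "scal_subspace F J K"
    by (auto simp: scal_subspace_def K_def linear_0[OF lin] linear_add[OF lin] Ts
        hip_add_left hip_smul_left)
  have dK: "d n - P (d n) \<in> K" for n
    using projection_residual_orthogonal[OF u] ker by (auto simp: K_def P_def)
  define g where "g = gram_schmidt F J (\<lambda>n. d n - P (d n))"
  have gK: "g n \<in> K" for n unfolding g_def by (rule gram_schmidt_in_scal_subspace[OF K dK])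
  define f where "f m = (if even m then u (m div 2) else g (m div 2))" for m
  have "orthonormal_or_zero F J f"
    unfolding f_def g_def using gK
    by (intro orthonormal_or_zero_interleave[OF u] orthonormal_or_zero_gram_schmidt)
       (auto simp: K_def g_def)
  moreover have "\<exists>c. T (f m) = c *\<^sub>R f m" for m
    using eig gK by (auto simp: f_def K_def)
  moreover have "x = 0" if x: "\<forall>m. hip F J x (f m) = 0" for x
  proof (rule hip_orthogonal_dense_eq_0[OF D(2)])
    have xu: "hip F J x (u n) = 0" and xg: "hip F J x (g n) = 0" for n
      using x[rule_format, of "2 * n"] x[rule_format, of "Suc (2 * n)"] by (auto simp: f_def)
    fix y assume "y \<in> D"
    then obtain n where y: "y = d n" using range_d by auto
    have "hip F J x (d n - P (d n)) = 0"
      using orthogonal_gram_schmidt_imp_orthogonal[of x] xg by (auto simp: g_def)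
    moreover have "(\<lambda>k. cnj (hip F J (d n) (u k)) * hip F J x (u k)) sums hip F J x (P (d n))"
      unfolding P_def by (rule hip_synthesis_right_sums[OF u _ bessel_summable[OF u]]) simp
    then have "hip F J x (P (d n)) = 0" by (simp add: xu sums_unique2[OF _ sums_zero])
    ultimately show "hip F J x y = 0" by (simp add: y hip_diff_right)
  qed
  ultimately show ?thesis by blast
qed

text \<open>A complete family with finitely many nonzero members would span the space, together with
  its images under J.\<close>
lemma complete_orthonormal_or_zero_infinite:
  assumes f: "orthonormal_or_zero F J f" and complete: "\<And>x. (\<And>m. hip F J x (f m) = 0) \<Longrightarrow> x = 0"
    and infd: "\<forall>B::'a set. finite B \<longrightarrow> span B \<noteq> UNIV"
  shows "infinite {m. f m \<noteq> 0}"
proof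
  define N where "N = {m. f m \<noteq> 0}"
  assume fin: "finite {m. f m \<noteq> 0}"
  then have fin: "finite N" by (simp add: N_def)
  define B where "B = f ` N \<union> J ` f ` N"
  have "x \<in> span B" for x
  proof -
    define y where "y = x - (\<Sum>m\<in>N. smul F J (hip F J x (f m)) (f m))"
    have N: "f k \<noteq> 0 \<longleftrightarrow> k \<in> N" "k \<notin> N \<Longrightarrow> f k = 0" for k by (simp_all add: N_def)
    have "hip F J y (f k) = 0" for k
      by (cases "k \<in> N") (simp_all add: y_def hip_diff_left hip_sum_smul_left[OF f _ fin] N)
    then have x: "x = (\<Sum>m\<in>N. smul F J (hip F J x (f m)) (f m))"
      using complete[of y] by (simp add: y_def)
    have "smul F J c (f m) \<in> span B" if "m \<in> N" for c m
    proof -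
      have "f m \<in> span B" "J (f m) \<in> span B" using that by (auto simp: B_def intro: span_base)
      then show ?thesis by (cases F) (auto simp: smul_def intro!: span_add span_scale)
    qed
    then show ?thesis by (subst x) (intro span_sum)
  qed
  moreover have "finite B" using fin by (simp add: B_def)
  ultimately show False using infd by auto
qed

lemma orthonormal_or_zero_complete_imp_basis:
  assumes f: "orthonormal_or_zero F J f" and complete: "\<And>x. (\<And>m. hip F J x (f m) = 0) \<Longrightarrow> x = 0"
    and infd: "\<forall>B::'a set. finite B \<longrightarrow> span B \<noteq> UNIV"
  shows "\<exists>r. orthonormal_basis F J (\<lambda>k. f (r k))"
proof -
  define N where "N = {m. f m \<noteq> 0}"
  have N: "infinite N" unfolding N_def by (rule complete_orthonormal_or_zero_infinite[OF f complete infd])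
  define r where "r = enumerate N"
  have r: "f (r k) \<noteq> 0" for k using enumerate_in_set[OF N] by (simp add: r_def N_def)
  have "orthonormal_basis F J (\<lambda>k. f (r k))"
    unfolding orthonormal_basis_def
  proof (intro conjI allI impI)
    fix i j :: nat
    have "r i \<noteq> r j" if "i \<noteq> j"
      using that strict_mono_enumerate[OF N] by (simp add: r_def strict_mono_eq)
    then show "hip F J (f (r i)) (f (r j)) = (if i = j then 1 else 0)"
      using r[of i] orthonormal_or_zero_hip[OF f, of "r i" "r j"] by auto
  next
    fix x assume x: "\<forall>j. hip F J x (f (r j)) = 0"
    have "hip F J x (f m) = 0" for m
    proof (cases "m \<in> N")
      case True
      then obtain k where "r k = m" using enumerate_Ex[OF N] by (auto simp: r_def)
      then show ?thesis using x by auto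
    qed (simp add: N_def)
    then show "x = 0" by (rule complete)
  qed
  then show ?thesis by blast
qed

lemma hilbert_schmidt_eigenbasis:
  assumes HS: "hilbert_schmidt F J T" and sa: "self_adjoint_op F J T"
    and sep: "\<exists>D::'a set. countable D \<and> closure D = UNIV"
    and infd: "\<forall>B::'a set. finite B \<longrightarrow> span B \<noteq> UNIV"
  shows "\<exists>f a. orthonormal_basis F J f \<and> (\<forall>k. T (f k) = a k *\<^sub>R f k) \<and> a \<in> l2_seqs"
proof -
  obtain e where T: "bounded_op F J T" and e: "orthonormal_basis F J e"
    and hs: "summable (\<lambda>j. (norm (T (e j)))\<^sup>2)"
    using HS by (auto simp: hilbert_schmidt_def)
  obtain f0 where f0: "orthonormal_or_zero F J f0" and eig: "\<And>m. \<exists>c. T (f0 m) = c *\<^sub>R f0 m"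
    and complete: "\<And>x. (\<And>m. hip F J x (f0 m) = 0) \<Longrightarrow> x = 0"
    using eigenfamily_completion[OF T orthonormal_or_zero_eigen_seq[OF T sa e hs]
        eigen_seq_eigenvector[OF T sa e hs] eigen_seq_kernel[OF T sa e hs] sep] by blast
  obtain r where f: "orthonormal_basis F J (\<lambda>k. f0 (r k))"
    using orthonormal_or_zero_complete_imp_basis[OF f0 complete infd] by blast
  define a where "a k = (SOME c. T (f0 (r k)) = c *\<^sub>R f0 (r k))" for k
  have fa: "T (f0 (r k)) = a k *\<^sub>R f0 (r k)" for k
    unfolding a_def by (rule someI_ex) (rule eig)
  have "summable (\<lambda>k. (norm (T (f0 (r k))))\<^sup>2)"
    by (rule hilbert_schmidt_summable_orthonormal_or_zero[OF sa e hs
          orthonormal_basis_imp_orthonormal_or_zero[OF f]])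
  then have "a \<in> l2_seqs"
    by (simp add: fa norm_orthonormal_basis[OF f] l2_seqs_def power_mult_distrib)
  with f fa show ?thesis by blast
qed

end

context hilbert_space
begin

lemma injective_imp_l2_closed_span_eq:
  assumes inj: "injective_family F J X" and e: "orthonormal_basis F J e"
  shows "l2_closed_span (\<lambda>k j. (cmod (hip F J (X k) (e j)))\<^sup>2) = l2_seqs"
proof (rule l2_closed_span_eq_l2_seqsI)
  show "inner (e i) (e j) = (if i = j then 1 else 0)" for i j
    using arg_cong[OF orthonormal_basis_hip[OF e, of i j], of Re] by (simp add: Re_hip)
  show "(\<lambda>j. (cmod (hip F J (X k) (e j)))\<^sup>2) \<in> l2_seqs" for k
    by (rule coeff_sq_in_l2_seqs[OF orthonormal_basis_imp_orthonormal_or_zero[OF e]])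
  fix a assume a: "a \<in> l2_seqs" and orth: "\<And>k. (\<lambda>j. (cmod (hip F J (X k) (e j)))\<^sup>2 * a j) sums 0"
  have "hip F J (diag_op e a (X k)) (X k) = 0" for k
    using hip_eq_0_iff_eigenbasis[OF e self_adjoint_diag_op[OF e a] diag_op_basis[OF e a]] orth by blast
  then have "diag_op e a x = 0" for x
    using inj hilbert_schmidt_diag_op[OF e a] self_adjoint_diag_op[OF e a]
    by (simp add: injective_family_def)
  then show "a = (\<lambda>_. 0)"
    using diag_op_basis[OF e a] orthonormal_basis_nonzero[OF e] by fastforce
qed

lemma l2_closed_span_eq_imp_injective:
  assumes sep: "\<exists>D::'a set. countable D \<and> closure D = UNIV"
    and infd: "\<forall>B::'a set. finite B \<longrightarrow> span B \<noteq> UNIV"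
    and span: "\<And>e. orthonormal_basis F J e \<Longrightarrow>
      l2_closed_span (\<lambda>k j. (cmod (hip F J (X k) (e j)))\<^sup>2) = l2_seqs"
  shows "injective_family F J X"
  unfolding injective_family_def
proof (intro allI impI)
  fix T x assume "hilbert_schmidt F J T \<and> self_adjoint_op F J T \<and> (\<forall>k. hip F J (T (X k)) (X k) = 0)"
  then have HS: "hilbert_schmidt F J T" and sa: "self_adjoint_op F J T"
    and quad: "\<And>k. hip F J (T (X k)) (X k) = 0" by auto
  obtain f a where f: "orthonormal_basis F J f" and eig: "\<And>k. T (f k) = a k *\<^sub>R f k"
    and a: "a \<in> l2_seqs"
    using hilbert_schmidt_eigenbasis[OF HS sa sep infd] by blast
  have "a \<in> l2_closed_span (\<lambda>k j. (cmod (hip F J (X k) (f j)))\<^sup>2)" using span[OF f] a by simp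
  then have "a j = 0" for j
    using l2_closed_span_orthogonal_eq_0 hip_eq_0_iff_eigenbasis[OF f sa eig] quad by blast
  then have "hip F J (T x) (f k) = hip F J 0 (f k)" for k
    using sa by (simp add: self_adjoint_op_def eig)
  then show "T x = 0" by (rule orthonormal_basis_eqI[OF f])
qed

end

theorem mainTheorem10:
  fixes F :: scalar_field and J :: "'a::{real_inner, complete_space} \<Rightarrow> 'a"
    and X :: "nat \<Rightarrow> 'a"
  assumes "admissible F J"
    and "\<exists>D::'a set. countable D \<and> closure D = UNIV"
    and "\<forall>B::'a set. finite B \<longrightarrow> span B \<noteq> UNIV"
    and "is_frame F J X"
  shows "injective_family F J X \<longleftrightarrow>
    (\<forall>e. orthonormal_basis F J e \<longrightarrow>
       l2_closed_span (\<lambda>k j. (cmod (hip F J (X k) (e j)))\<^sup>2) = l2_seqs)"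
proof -
  interpret hilbert_space F J by unfold_locales (rule assms(1))
  show ?thesis
    using injective_imp_l2_closed_span_eq l2_closed_span_eq_imp_injective[OF assms(2,3)] by blast
qed

end
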